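(* Let $\mathcal A$ be a unital $C^*$-algebra, $\mathcal H$ a Hilbert space, and $\Phi,\Psi\in\mathcal{CP}(\mathcal A;\mathcal H)$. Fix a minimal Stinespring dilation $(\mathcal M,\pi,J)$ of $\Psi$. Then $\Phi=_C\Psi$ if and only if there exists $E\in F(\Psi)$ with bounded inverse such that $\Phi(a)=J^\dagger\pi(a)EJ$ for all $a\in\mathcal A$.
   Context: $\mathcal{CP}(\mathcal A;\mathcal H)$ is the convex set of unital completely positive linear maps $\Phi:\mathcal A\to\mathcal L(\mathcal H)$ (unital meaning $\Phi(1)=I_{\mathcal H}$). A minimal Stinespring dilation of $\Psi$ is a triple $(\mathcal M,\pi,J)$ with $\mathcal M$ a Hilbert space, $\pi:\mathcal A\to\mathcal L(\mathcal M)$ a unital *-representation and $J:\mathcal H\to\mathcal M$ linear, such that $\Psi(a)=J^\dagger\pi(a)J$ for all $a$ and the vectors $\pi(a)J|v\rangle$ ($a\in\mathcal A$, $|v\rangle\in\mathcal H$) span a dense subspace of $\mathcal M$. $F(\Psi)$ is the set of positive operators $E\in\mathcal L(\mathcal M)$ commuting with $\pi(a)$ for all $a\in\mathcal A$ and satisfying $J^\dagger EJ=I$. For elements of a convex set, $\Phi\leq_C\Psi$ means $\Psi=t\Phi+(1-t)\Psi'$ for some $\Psi'$ in the set and $0<t\leq 1$; $\Phi=_C\Psi$ means $\Phi\leq_C\Psi$ and $\Psi\leq_C\Phi$. *)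

theory Defs
  imports "HOL-Analysis.Analysis"
begin

definition cnonneg :: "complex \<Rightarrow> bool" where
  "cnonneg z \<longleftrightarrow> Im z = 0 \<and> 0 \<le> Re z"

class complex_vector = real_vector +
  fixes scaleC :: "complex \<Rightarrow> 'a \<Rightarrow> 'a" (infixr \<open>*\<^sub>C\<close> 75)
  assumes scaleC_add_right: "c *\<^sub>C (x + y) = c *\<^sub>C x + c *\<^sub>C y"
    and scaleC_add_left: "(b + c) *\<^sub>C x = b *\<^sub>C x + c *\<^sub>C x"
    and scaleC_scaleC: "b *\<^sub>C (c *\<^sub>C x) = (b * c) *\<^sub>C x"
    and scaleC_one: "1 *\<^sub>C x = x"
    and scaleR_scaleC: "r *\<^sub>R x = complex_of_real r *\<^sub>C x"

text \<open>Complex inner product spaces; the inner product is conjugate-linear in the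
  first and linear in the second argument (bra-ket convention); the norm is the one
  induced by the inner product.\<close>
class complex_inner = complex_vector + real_normed_vector +
  fixes cinner :: "'a \<Rightarrow> 'a \<Rightarrow> complex"
  assumes cinner_commute: "cinner x y = cnj (cinner y x)"
    and cinner_add_right: "cinner x (y + z) = cinner x y + cinner x z"
    and cinner_scaleC_right: "cinner x (c *\<^sub>C y) = c * cinner x y"
    and cinner_nonneg: "cnonneg (cinner x x)"
    and norm_eq_sqrt_cinner: "norm x = sqrt (Re (cinner x x))"

class chilbert_space = complex_inner + complete_space

class cstar_algebra = complex_vector + real_normed_algebra_1 + banach +
  fixes invol :: "'a \<Rightarrow> 'a"
  assumes invol_invol: "invol (invol a) = a"
    and invol_add: "invol (a + b) = invol a + invol b"
    and invol_mult: "invol (a * b) = invol b * invol a"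
    and invol_scaleC: "invol (c *\<^sub>C a) = cnj c *\<^sub>C invol a"
    and scaleC_mult_left: "(c *\<^sub>C a) * b = c *\<^sub>C (a * b)"
    and mult_scaleC_right: "a * (c *\<^sub>C b) = c *\<^sub>C (a * b)"
    and norm_scaleC: "norm (c *\<^sub>C a) = cmod c * norm a"
    and cstar_identity: "norm (invol a * a) = (norm a)\<^sup>2"

definition clinear :: "('a::complex_vector \<Rightarrow> 'b::complex_vector) \<Rightarrow> bool" where
  "clinear f \<longleftrightarrow> (\<forall>x y. f (x + y) = f x + f y) \<and> (\<forall>c x. f (c *\<^sub>C x) = c *\<^sub>C f x)"

definition bounded_clinear ::
  "('a::{complex_vector,real_normed_vector} \<Rightarrow> 'b::{complex_vector,real_normed_vector}) \<Rightarrow> bool" where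
  "bounded_clinear f \<longleftrightarrow> clinear f \<and> (\<exists>K. \<forall>x. norm (f x) \<le> norm x * K)"

definition cadjoint :: "('a::complex_inner \<Rightarrow> 'b::complex_inner) \<Rightarrow> 'b \<Rightarrow> 'a" where
  "cadjoint T = (SOME S. \<forall>x y. cinner (S y) x = cinner y (T x))"

definition positive_op :: "('a::complex_inner \<Rightarrow> 'a) \<Rightarrow> bool" where
  "positive_op E \<longleftrightarrow> bounded_clinear E \<and> (\<forall>x. cnonneg (cinner x (E x)))"

definition has_bounded_inverse :: "('a::complex_inner \<Rightarrow> 'a) \<Rightarrow> bool" where
  "has_bounded_inverse E \<longleftrightarrow>
     (\<exists>F. bounded_clinear F \<and> E \<circ> F = id \<and> F \<circ> E = id)"

definition cspan :: "'a::complex_vector set \<Rightarrow> 'a set" where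
  "cspan S = {x. \<exists>F c. finite F \<and> F \<subseteq> S \<and> x = (\<Sum>v\<in>F. c v *\<^sub>C v)}"

definition op_valued_linear :: "('a::cstar_algebra \<Rightarrow> 'h::chilbert_space \<Rightarrow> 'h) \<Rightarrow> bool" where
  "op_valued_linear \<Phi> \<longleftrightarrow>
     (\<forall>a. bounded_clinear (\<Phi> a)) \<and>
     (\<forall>a b v. \<Phi> (a + b) v = \<Phi> a v + \<Phi> b v) \<and>
     (\<forall>c a v. \<Phi> (c *\<^sub>C a) v = c *\<^sub>C \<Phi> a v)"

text \<open>Complete positivity: for every n, the amplification \<open>\<Phi>\<^sub>n : M\<^sub>n(\<A>) \<rightarrow> M\<^sub>n(\<L>(\<H>)) = \<L>(\<H>\<^sup>n)\<close>
  maps positive matrices \<open>X = Y\<^sup>* Y\<close> (i.e. \<open>X i j = \<Sum>k. (Y k i)\<^sup>* Y k j\<close>) to positive operators on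
  \<open>\<H>\<^sup>n\<close>, i.e. \<open>\<Sum>i j. \<langle>\<xi> i, \<Phi>(X i j) \<xi> j\<rangle> \<ge> 0\<close> for all \<open>\<xi> \<in> \<H>\<^sup>n\<close>.\<close>
definition completely_positive :: "('a::cstar_algebra \<Rightarrow> 'h::chilbert_space \<Rightarrow> 'h) \<Rightarrow> bool" where
  "completely_positive \<Phi> \<longleftrightarrow>
     (\<forall>(n::nat) (Y::nat \<Rightarrow> nat \<Rightarrow> 'a) (\<xi>::nat \<Rightarrow> 'h).
        cnonneg (\<Sum>i<n. \<Sum>j<n. cinner (\<xi> i) (\<Phi> (\<Sum>k<n. invol (Y k i) * Y k j) (\<xi> j))))"

definition UCP :: "('a::cstar_algebra \<Rightarrow> 'h::chilbert_space \<Rightarrow> 'h) set" where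
  "UCP = {\<Phi>. op_valued_linear \<Phi> \<and> completely_positive \<Phi> \<and> \<Phi> 1 = id}"

definition conv_le :: "('a \<Rightarrow> 'h::real_vector \<Rightarrow> 'h) set \<Rightarrow> ('a \<Rightarrow> 'h \<Rightarrow> 'h) \<Rightarrow> ('a \<Rightarrow> 'h \<Rightarrow> 'h) \<Rightarrow> bool" where
  "conv_le C \<Phi> \<Psi> \<longleftrightarrow>
     (\<exists>\<Psi>'\<in>C. \<exists>t::real. 0 < t \<and> t \<le> 1 \<and> \<Psi> = (\<lambda>a v. t *\<^sub>R \<Phi> a v + (1 - t) *\<^sub>R \<Psi>' a v))"

definition conv_eq :: "('a \<Rightarrow> 'h::real_vector \<Rightarrow> 'h) set \<Rightarrow> ('a \<Rightarrow> 'h \<Rightarrow> 'h) \<Rightarrow> ('a \<Rightarrow> 'h \<Rightarrow> 'h) \<Rightarrow> bool" where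
  "conv_eq C \<Phi> \<Psi> \<longleftrightarrow> conv_le C \<Phi> \<Psi> \<and> conv_le C \<Psi> \<Phi>"

definition unital_star_rep :: "('a::cstar_algebra \<Rightarrow> 'm::chilbert_space \<Rightarrow> 'm) \<Rightarrow> bool" where
  "unital_star_rep \<pi> \<longleftrightarrow>
     (\<forall>a. bounded_clinear (\<pi> a)) \<and>
     (\<forall>a b v. \<pi> (a + b) v = \<pi> a v + \<pi> b v) \<and>
     (\<forall>c a v. \<pi> (c *\<^sub>C a) v = c *\<^sub>C \<pi> a v) \<and>
     (\<forall>a b. \<pi> (a * b) = \<pi> a \<circ> \<pi> b) \<and>
     (\<forall>a. \<pi> (invol a) = cadjoint (\<pi> a)) \<and>
     \<pi> 1 = id"

definition min_stinespring ::
  "('a::cstar_algebra \<Rightarrow> 'h::chilbert_space \<Rightarrow> 'h) \<Rightarrow> ('a \<Rightarrow> 'm::chilbert_space \<Rightarrow> 'm) \<Rightarrow> ('h \<Rightarrow> 'm) \<Rightarrow> bool" where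
  "min_stinespring \<Psi> \<pi> J \<longleftrightarrow>
     unital_star_rep \<pi> \<and> bounded_clinear J \<and>
     (\<forall>a. \<Psi> a = cadjoint J \<circ> \<pi> a \<circ> J) \<and>
     closure (cspan {\<pi> a (J v) | a v. True}) = UNIV"

text \<open>\<open>F(\<Psi>)\<close> relative to the fixed dilation \<open>(\<M>,\<pi>,J)\<close>.\<close>
definition F_set :: "('a::cstar_algebra \<Rightarrow> 'm::chilbert_space \<Rightarrow> 'm) \<Rightarrow> ('h::chilbert_space \<Rightarrow> 'm) \<Rightarrow> ('m \<Rightarrow> 'm) set" where
  "F_set \<pi> J = {E. positive_op E \<and> (\<forall>a. E \<circ> \<pi> a = \<pi> a \<circ> E) \<and> cadjoint J \<circ> E \<circ> J = id}"

end

theory Submission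
  imports Defs
begin

text \<open>If \<open>\<Phi> =\<^sub>C \<Psi>\<close>, then \<open>\<Phi>\<close> and \<open>\<Psi>\<close> dominate each other up to positive constants, hence so do
  their kernel forms \<open>\<langle>a \<otimes> v, b \<otimes> w\<rangle> = \<langle>v, \<Phi>(a\<^sup>* b) w\<rangle>\<close> on formal sums. The kernel form of \<open>\<Psi>\<close>
  is the inner product of \<open>\<M>\<close> pulled back along \<open>a \<otimes> v \<mapsto> \<pi>(a) J v\<close>, whose range is dense by
  minimality. So the kernel form of \<open>\<Phi>\<close> descends to a bounded coercive form on \<open>\<M>\<close>, and the
  operator \<open>E\<close> representing it (Riesz) is positive, invertible, commutes with \<open>\<pi>\<close> and compresses to
  \<open>\<Phi>\<close>. Conversely, an invertible positive \<open>E\<close> in the commutant satisfies \<open>c \<le> E \<le> K\<close>, so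
  \<open>1 - r E\<close> and \<open>E - r\<close> are positive in the commutant for small \<open>r > 0\<close>; their compressions are
  completely positive and exhibit \<open>\<Phi> \<le>\<^sub>C \<Psi>\<close> and \<open>\<Psi> \<le>\<^sub>C \<Phi>\<close>.\<close>

lemma scaleC_zero_left [simp]: "0 *\<^sub>C (x::'a::complex_vector) = 0"
  by (metis scaleR_scaleC of_real_0 real_vector.scale_zero_left)

lemma scaleC_zero_right [simp]: "c *\<^sub>C (0::'a::complex_vector) = 0"
  using scaleC_add_right[of c "0::'a" 0] by simp

lemma scaleC_minus_left: "(- c) *\<^sub>C (x::'a::complex_vector) = - (c *\<^sub>C x)"
  using scaleC_add_left[of "-c" c x] by (simp add: add_eq_0_iff2)

lemma scaleC_minus_right: "c *\<^sub>C (- x::'a::complex_vector) = - (c *\<^sub>C x)"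
  using scaleC_add_right[of c "-x" x] by (simp add: add_eq_0_iff2)

lemma scaleC_minus1_left: "(- 1) *\<^sub>C (x::'a::complex_vector) = - x"
  by (simp add: scaleC_minus_left scaleC_one)

lemma scaleC_diff_right: "c *\<^sub>C (x - y) = c *\<^sub>C x - c *\<^sub>C (y::'a::complex_vector)"
  by (simp only: diff_conv_add_uminus scaleC_add_right scaleC_minus_right)

lemma scaleR_scaleC_commute: "r *\<^sub>R (c *\<^sub>C x) = c *\<^sub>C (r *\<^sub>R (x::'a::complex_vector))"
  by (simp add: scaleR_scaleC scaleC_scaleC mult.commute)

lemma cinner_add_left: "cinner (x + y) z = cinner x z + cinner y (z::'a::complex_inner)"
  by (metis cinner_commute cinner_add_right complex_cnj_add)

lemma cinner_scaleC_left: "cinner (c *\<^sub>C x) y = cnj c * cinner x (y::'a::complex_inner)"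
  by (metis cinner_commute cinner_scaleC_right complex_cnj_mult)

lemma cinner_zero_left [simp]: "cinner 0 (y::'a::complex_inner) = 0"
  using cinner_add_left[of 0 0 y] by simp

lemma cinner_zero_right [simp]: "cinner y (0::'a::complex_inner) = 0"
  using cinner_add_right[of y 0 0] by simp

lemma cinner_diff_left: "cinner (x - y) z = cinner x z - cinner y (z::'a::complex_inner)"
  by (metis add_diff_cancel cinner_add_left diff_add_cancel)

lemma cinner_diff_right: "cinner z (x - y) = cinner z x - cinner z (y::'a::complex_inner)"
  by (metis add_diff_cancel cinner_add_right diff_add_cancel)

lemma cinner_scaleR_left: "cinner (r *\<^sub>R x) y = of_real r * cinner x (y::'a::complex_inner)"
  by (simp add: scaleR_scaleC cinner_scaleC_left)

lemma cinner_scaleR_right: "cinner y (r *\<^sub>R x) = of_real r * cinner y (x::'a::complex_inner)"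
  by (simp add: scaleR_scaleC cinner_scaleC_right)

lemma cinner_sum_left: "cinner (sum f A) (y::'a::complex_inner) = (\<Sum>x\<in>A. cinner (f x) y)"
  by (induction A rule: infinite_finite_induct) (auto simp: cinner_add_left)

lemma cinner_sum_right: "cinner (y::'a::complex_inner) (sum f A) = (\<Sum>x\<in>A. cinner y (f x))"
  by (induction A rule: infinite_finite_induct) (auto simp: cinner_add_right)

lemma cinner_sum_list_left:
  "cinner (sum_list (map f xs)) (y::'a::complex_inner) = (\<Sum>x\<leftarrow>xs. cinner (f x) y)"
  by (induction xs) (auto simp: cinner_add_left)

lemma cinner_sum_list_right:
  "cinner (y::'a::complex_inner) (sum_list (map f xs)) = (\<Sum>x\<leftarrow>xs. cinner y (f x))"
  by (induction xs) (auto simp: cinner_add_right)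

lemma cinner_self: "cinner x x = complex_of_real ((norm (x::'a::complex_inner))\<^sup>2)"
  using cinner_nonneg[of x] norm_eq_sqrt_cinner[of x] by (auto simp: cnonneg_def complex_eq_iff)

lemma Re_cinner_self: "Re (cinner x x) = (norm (x::'a::complex_inner))\<^sup>2"
  by (simp add: cinner_self)

lemma cinner_self_eq_0 [simp]: "cinner x x = 0 \<longleftrightarrow> x = (0::'a::complex_inner)"
  by (simp add: cinner_self)

lemma norm_scaleC_inner: "norm (c *\<^sub>C x) = cmod c * norm (x::'a::complex_inner)"
proof -
  have cc: "cnj c * c = complex_of_real ((cmod c)\<^sup>2)"
    using complex_norm_square[of c] by (simp add: mult.commute)
  have "(norm (c *\<^sub>C x))\<^sup>2 = Re (cinner (c *\<^sub>C x) (c *\<^sub>C x))" by (rule Re_cinner_self[symmetric])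
  also have "\<dots> = Re (cnj c * c * cinner x x)"
    by (simp only: cinner_scaleC_left cinner_scaleC_right mult.assoc mult.left_commute)
  also have "\<dots> = (cmod c * norm x)\<^sup>2"
    unfolding cc cinner_self by (simp add: power_mult_distrib)
  finally show ?thesis by (simp add: power2_eq_iff_nonneg)
qed

lemma cinner_ext: "(\<And>v. cinner v x = cinner v y) \<Longrightarrow> x = (y::'a::complex_inner)"
  using cinner_self_eq_0[of "x - y"] by (simp add: cinner_diff_right)

lemma cnonneg_add: "cnonneg a \<Longrightarrow> cnonneg b \<Longrightarrow> cnonneg (a + b)"
  by (simp add: cnonneg_def)

lemma cnonneg_sum: "(\<And>i. i \<in> A \<Longrightarrow> cnonneg (f i)) \<Longrightarrow> cnonneg (sum f A)"
  by (induction A rule: infinite_finite_induct) (auto intro: cnonneg_add simp: cnonneg_def)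

lemma cnonneg_of_real_mult: "0 \<le> r \<Longrightarrow> cnonneg z \<Longrightarrow> cnonneg (complex_of_real r * z)"
  by (simp add: cnonneg_def)

lemma nonneg_quadratic_discriminant:
  fixes a b k :: real
  assumes "\<And>s. 0 \<le> a - 2 * s * k + s\<^sup>2 * k * b" and "0 \<le> k" and "0 \<le> b"
  shows "k \<le> a * b"
proof -
  have a: "0 \<le> a" using assms(1)[of 0] by simp
  consider "k = 0" | "k > 0" "b = 0" | "k > 0" "b > 0" using assms(2,3) by linarith
  then show ?thesis
  proof cases
    case 2
    have "0 \<le> a - 2 * ((a + 1) / k) * k" using assms(1)[of "(a + 1) / k"] 2 by simp
    with 2 a show ?thesis by simp
  next
    case 3
    have "0 \<le> a - 2 * (1 / b) * k + (1 / b)\<^sup>2 * k * b" by (rule assms(1))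
    with 3 show ?thesis by (simp add: power2_eq_square field_simps)
  qed (use a assms in simp)
qed

text \<open>The carrier of the form need not be a vector space: the form is also used on lists,
  with append as addition.\<close>

locale nonneg_sesquilinear =
  fixes plus :: "'v \<Rightarrow> 'v \<Rightarrow> 'v" and scale :: "complex \<Rightarrow> 'v \<Rightarrow> 'v"
    and B :: "'v \<Rightarrow> 'v \<Rightarrow> complex"
  assumes add_right: "B x (plus y z) = B x y + B x z"
    and add_left: "B (plus x y) z = B x z + B y z"
    and scale_right: "B x (scale c y) = c * B x y"
    and scale_left: "B (scale c x) y = cnj c * B x y"
    and nonneg: "cnonneg (B x x)"
begin

lemma Re_self_nonneg: "0 \<le> Re (B x x)"
  using nonneg[of x] by (simp add: cnonneg_def)

lemma hermitian: "B y x = cnj (B x y)"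
proof -
  have "Im (B (plus x y) (plus x y)) = 0" "Im (B (plus x (scale \<i> y)) (plus x (scale \<i> y))) = 0"
    "Im (B x x) = 0" "Im (B y y) = 0"
    using nonneg by (auto simp: cnonneg_def)
  then show ?thesis
    by (simp add: add_left add_right scale_left scale_right complex_eq_iff)
qed

lemma Re_self_shift:
  fixes s :: real and x y :: 'v
  defines "\<mu> \<equiv> - (complex_of_real s * cnj (B x y))"
  shows "Re (B (plus x (scale \<mu> y)) (plus x (scale \<mu> y)))
    = Re (B x x) - 2 * s * (cmod (B x y))\<^sup>2 + s\<^sup>2 * (cmod (B x y))\<^sup>2 * Re (B y y)"
proof -
  let ?w = "B x y"
  have "B (plus x (scale \<mu> y)) (plus x (scale \<mu> y))
      = B x x + \<mu> * ?w + cnj \<mu> * cnj ?w + cnj \<mu> * \<mu> * B y y"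
    using hermitian[of x y] by (simp add: add_left add_right scale_left scale_right algebra_simps)
  moreover have "\<mu> * ?w = - complex_of_real (s * (cmod ?w)\<^sup>2)"
    and "cnj \<mu> * cnj ?w = - complex_of_real (s * (cmod ?w)\<^sup>2)"
    and "cnj \<mu> * \<mu> = complex_of_real (s\<^sup>2 * (cmod ?w)\<^sup>2)"
    using complex_norm_square[of ?w]
    by (simp_all add: \<mu>_def mult.commute mult.left_commute power_mult_distrib power2_eq_square)
  ultimately show ?thesis by simp
qed

lemma cauchy_schwarz: "(cmod (B x y))\<^sup>2 \<le> Re (B x x) * Re (B y y)"
proof (rule nonneg_quadratic_discriminant)
  show "0 \<le> Re (B x x) - 2 * s * (cmod (B x y))\<^sup>2 + s\<^sup>2 * (cmod (B x y))\<^sup>2 * Re (B y y)" for s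
    using Re_self_nonneg Re_self_shift by metis
qed (simp_all add: Re_self_nonneg)

lemma cauchy_schwarz_sqrt: "cmod (B x y) \<le> sqrt (Re (B x x)) * sqrt (Re (B y y))"
  using cauchy_schwarz[of x y] by (metis real_sqrt_abs real_sqrt_le_mono real_sqrt_mult abs_norm_cancel)

lemma null_self_imp_zero: "Re (B x x) = 0 \<Longrightarrow> B x y = 0"
  using cauchy_schwarz[of x y] by simp

end

interpretation cinner: nonneg_sesquilinear "(+)" "(*\<^sub>C)" "cinner :: 'a::complex_inner \<Rightarrow> _"
  by unfold_locales (auto simp: cinner_add_left cinner_add_right cinner_scaleC_left cinner_scaleC_right
      cinner_nonneg)

lemma cinner_cauchy_schwarz: "cmod (cinner x y) \<le> norm x * norm (y::'a::complex_inner)"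
  using cinner.cauchy_schwarz_sqrt[of x y] by (simp add: Re_cinner_self)

section \<open>Projections and the Riesz representation theorem\<close>

lemma parallelogram_law:
  "(norm (a + b))\<^sup>2 + (norm (a - b))\<^sup>2 = 2 * (norm a)\<^sup>2 + 2 * (norm (b::'a::complex_inner))\<^sup>2"
  by (simp only: Re_cinner_self[symmetric])
    (simp add: cinner_add_left cinner_add_right cinner_diff_left cinner_diff_right)

lemma closest_point_exists:
  fixes V :: "'a::chilbert_space set"
  assumes "closed V" and "V \<noteq> {}"
    and midpoint: "\<And>u v. u \<in> V \<Longrightarrow> v \<in> V \<Longrightarrow> (1/2) *\<^sub>R (u + v) \<in> V"
  shows "\<exists>p\<in>V. \<forall>v\<in>V. norm (y - p) \<le> norm (y - v)"
proof -
  define d where "d = Inf ((\<lambda>v. norm (y - v)) ` V)"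
  have d_le: "d \<le> norm (y - v)" if "v \<in> V" for v
    unfolding d_def using that by (intro cInf_lower bdd_belowI[of _ 0]) auto
  have "0 \<le> d" unfolding d_def using assms(2) by (auto intro!: cInf_greatest)
  have "\<exists>v\<in>V. norm (y - v) < d + inverse (real (Suc n))" for n
    using cInf_lessD[of "(\<lambda>v. norm (y - v)) ` V" "d + inverse (real (Suc n))"] assms(2)
    by (auto simp: d_def)
  then obtain x where x_in: "\<And>n. x n \<in> V" and x_close: "\<And>n. norm (y - x n) < d + inverse (real (Suc n))"
    by metis
  define \<epsilon> where "\<epsilon> n = (d + inverse (real (Suc n)))\<^sup>2 - d\<^sup>2" for n
  have "\<epsilon> \<longlonglongrightarrow> (d + 0)\<^sup>2 - d\<^sup>2"
    unfolding \<epsilon>_def by (intro tendsto_intros LIMSEQ_inverse_real_of_nat)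
  then have \<epsilon>_0: "\<epsilon> \<longlonglongrightarrow> 0" by simp
  have x_dist: "(norm (x m - x n))\<^sup>2 \<le> 2 * \<epsilon> m + 2 * \<epsilon> n" for m n
  proof -
    let ?a = "y - x m" and ?b = "y - x n"
    have "?a + ?b = 2 *\<^sub>R (y - (1/2) *\<^sub>R (x m + x n))" by (simp add: algebra_simps scaleR_2)
    then have "2 * d \<le> norm (?a + ?b)" using d_le[OF midpoint[OF x_in x_in]] by simp
    then have "4 * d\<^sup>2 \<le> (norm (?a + ?b))\<^sup>2"
      using power_mono[of "2 * d" "norm (?a + ?b)" 2] \<open>0 \<le> d\<close> by (simp add: power_mult_distrib)
    moreover have "(norm ?a)\<^sup>2 \<le> (d + inverse (real (Suc m)))\<^sup>2"
      and "(norm ?b)\<^sup>2 \<le> (d + inverse (real (Suc n)))\<^sup>2"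
      using x_close[of m] x_close[of n] by (auto intro!: power_mono)
    moreover have "(norm (?a - ?b))\<^sup>2 = (norm (x m - x n))\<^sup>2" by (simp add: norm_minus_commute)
    ultimately show ?thesis using parallelogram_law[of ?a ?b] unfolding \<epsilon>_def by (smt (verit))
  qed
  have "Cauchy x"
  proof (rule CauchyI)
    fix e :: real assume "0 < e"
    then have "eventually (\<lambda>n. \<epsilon> n < e\<^sup>2 / 4) sequentially"
      using order_tendstoD(2)[OF \<epsilon>_0, of "e\<^sup>2 / 4"] by simp
    then obtain N where N: "\<And>n. n \<ge> N \<Longrightarrow> \<epsilon> n < e\<^sup>2 / 4" by (auto simp: eventually_sequentially)
    have "norm (x m - x n) < e" if "m \<ge> N" "n \<ge> N" for m n
    proof -
      have "(norm (x m - x n))\<^sup>2 < e\<^sup>2" using x_dist[of m n] N[OF that(1)] N[OF that(2)] by linarith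
      then show ?thesis using \<open>0 < e\<close> by (simp add: power_less_imp_less_base)
    qed
    then show "\<exists>M. \<forall>m\<ge>M. \<forall>n\<ge>M. norm (x m - x n) < e" by blast
  qed
  then obtain p where p: "x \<longlonglongrightarrow> p" using Cauchy_convergent_iff convergent_def by blast
  have "norm (y - p) \<le> d"
  proof (rule LIMSEQ_le)
    show "(\<lambda>n. norm (y - x n)) \<longlonglongrightarrow> norm (y - p)" by (intro tendsto_intros p)
    show "(\<lambda>n. d + inverse (real (Suc n))) \<longlonglongrightarrow> d"
      using tendsto_add[OF tendsto_const LIMSEQ_inverse_real_of_nat, of d] by simp
  qed (use x_close less_imp_le in blast)
  then show ?thesis using closed_sequentially[OF assms(1) x_in p] d_le by force
qed

definition csubspace :: "'a::complex_vector set \<Rightarrow> bool" where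
  "csubspace S \<longleftrightarrow> 0 \<in> S \<and> (\<forall>x\<in>S. \<forall>y\<in>S. x + y \<in> S) \<and> (\<forall>c. \<forall>x\<in>S. c *\<^sub>C x \<in> S)"

lemma csubspace_add: "csubspace S \<Longrightarrow> x \<in> S \<Longrightarrow> y \<in> S \<Longrightarrow> x + y \<in> S"
  and csubspace_scaleC: "csubspace S \<Longrightarrow> x \<in> S \<Longrightarrow> c *\<^sub>C x \<in> S"
  by (auto simp: csubspace_def)

lemma csubspace_diff: "csubspace S \<Longrightarrow> x \<in> S \<Longrightarrow> y \<in> S \<Longrightarrow> x - y \<in> S"
  using csubspace_add[of S x "(- 1) *\<^sub>C y"] csubspace_scaleC[of S y "- 1"]
  by (simp add: scaleC_minus1_left)

lemma orthogonal_projection_exists: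
  fixes V :: "'a::chilbert_space set"
  assumes "closed V" and V: "csubspace V"
  shows "\<exists>p\<in>V. \<forall>v\<in>V. cinner v (y - p) = 0"
proof -
  have midpoint: "(1/2) *\<^sub>R (u + v) \<in> V" if "u \<in> V" "v \<in> V" for u v
    using that by (simp add: scaleR_scaleC csubspace_add[OF V] csubspace_scaleC[OF V])
  obtain p where "p \<in> V" and p_min: "\<And>v. v \<in> V \<Longrightarrow> norm (y - p) \<le> norm (y - v)"
    using closest_point_exists[OF assms(1) _ midpoint, of y] V unfolding csubspace_def by blast
  have "cinner (y - p) v = 0" if "v \<in> V" for v
  proof -
    let ?w = "cinner (y - p) v"
    have "0 \<le> 0 - 2 * s * (cmod ?w)\<^sup>2 + s\<^sup>2 * (cmod ?w)\<^sup>2 * (norm v)\<^sup>2" for s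
    proof -
      let ?\<mu> = "- (complex_of_real s * cnj ?w)"
      have "p - ?\<mu> *\<^sub>C v \<in> V"
        using csubspace_add[OF V \<open>p \<in> V\<close> csubspace_scaleC[OF V that, of "- ?\<mu>"]]
        by (simp add: scaleC_minus_left)
      then have "(norm (y - p))\<^sup>2 \<le> (norm (y - (p - ?\<mu> *\<^sub>C v)))\<^sup>2"
        using p_min by (simp add: power_mono)
      also have "y - (p - ?\<mu> *\<^sub>C v) = (y - p) + ?\<mu> *\<^sub>C v" by (simp add: algebra_simps)
      also have "(norm ((y - p) + ?\<mu> *\<^sub>C v))\<^sup>2
          = (norm (y - p))\<^sup>2 - 2 * s * (cmod ?w)\<^sup>2 + s\<^sup>2 * (cmod ?w)\<^sup>2 * (norm v)\<^sup>2"
        using cinner.Re_self_shift[where s = s and x = "y - p" and y = v] by (simp only: Re_cinner_self)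
      finally show ?thesis by simp
    qed
    then have "(cmod ?w)\<^sup>2 \<le> 0 * (norm v)\<^sup>2" by (intro nonneg_quadratic_discriminant) auto
    then show ?thesis by simp
  qed
  then show ?thesis using \<open>p \<in> V\<close> cinner_commute[of _ "y - p"] by (metis complex_cnj_zero)
qed

lemma lipschitz_imp_continuous:
  fixes f :: "'a::real_normed_vector \<Rightarrow> 'b::real_normed_vector"
  assumes "\<And>x y. norm (f x - f y) \<le> K * norm (x - y)"
  shows "continuous_on UNIV f"
proof -
  have "norm (f x - f y) \<le> max K 0 * norm (x - y)" for x y
    using assms[of x y] by (meson max.cobounded1 mult_right_mono norm_ge_zero order_trans)
  then show ?thesis
    by (intro lipschitz_on_continuous_on[of "max K 0"]) (auto simp: lipschitz_on_def dist_norm)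
qed

text \<open>The representing vector is read off a vector \<open>z\<close> orthogonal to the kernel:
  \<open>f x *\<^sub>C z - f z *\<^sub>C x\<close> lies in the kernel.\<close>

lemma riesz_representation:
  fixes f :: "'a::chilbert_space \<Rightarrow> complex"
  assumes add: "\<And>x y. f (x + y) = f x + f y" and scale: "\<And>c x. f (c *\<^sub>C x) = c * f x"
    and bound: "\<And>x. cmod (f x) \<le> K * norm x"
  shows "\<exists>u. \<forall>x. f x = cinner u x"
proof -
  have f_diff: "f (x - y) = f x - f y" for x y
    using add[of "x - y" y] by simp
  have "f 0 = 0" using scale[of 0 0] by simp
  have "continuous_on UNIV f"
    by (rule lipschitz_imp_continuous[of f K]) (simp add: f_diff[symmetric] bound)
  then have "closed {x. f x = 0}" by (rule closed_Collect_eq[OF _ continuous_on_const])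
  show ?thesis
  proof (cases "\<forall>x. f x = 0")
    case True
    then show ?thesis by (intro exI[of _ 0]) simp
  next
    case False
    then obtain y where "f y \<noteq> 0" by blast
    obtain p where "f p = 0" and orth: "\<And>v. f v = 0 \<Longrightarrow> cinner v (y - p) = 0"
      using orthogonal_projection_exists[OF \<open>closed {x. f x = 0}\<close>, of y] \<open>f 0 = 0\<close> add scale
      by (auto simp: csubspace_def)
    define z where "z = y - p"
    have "f z \<noteq> 0" using \<open>f y \<noteq> 0\<close> \<open>f p = 0\<close> by (simp add: z_def f_diff)
    then have "cinner z z \<noteq> 0" using \<open>f 0 = 0\<close> by auto
    have "f x = cinner (cnj (f z / cinner z z) *\<^sub>C z) x" for x
    proof -
      have "f (f x *\<^sub>C z - f z *\<^sub>C x) = 0" by (simp add: f_diff scale mult.commute)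
      then have "cinner z (f x *\<^sub>C z - f z *\<^sub>C x) = 0"
        using orth[of "f x *\<^sub>C z - f z *\<^sub>C x"] cinner_commute[of z] by (simp add: z_def)
      then have "f x * cinner z z = f z * cinner z x"
        by (simp add: cinner_diff_right cinner_scaleC_right)
      then show ?thesis using \<open>cinner z z \<noteq> 0\<close> by (simp add: cinner_scaleC_left field_simps)
    qed
    then show ?thesis by blast
  qed
qed

lemma bounded_clinear_add: "bounded_clinear T \<Longrightarrow> T (x + y) = T x + T y"
  by (simp add: bounded_clinear_def clinear_def)

lemma bounded_clinear_scaleC: "bounded_clinear T \<Longrightarrow> T (c *\<^sub>C x) = c *\<^sub>C T x"
  by (simp add: bounded_clinear_def clinear_def)

lemma bounded_clinear_zero: "bounded_clinear T \<Longrightarrow> T 0 = 0"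
  using bounded_clinear_scaleC[of T 0 0] by simp

lemma bounded_clinear_diff: "bounded_clinear T \<Longrightarrow> T (x - y) = T x - T y"
  by (metis add_diff_cancel bounded_clinear_add diff_add_cancel)

lemma bounded_clinear_scaleR: "bounded_clinear T \<Longrightarrow> T (r *\<^sub>R x) = r *\<^sub>R T x"
  by (simp add: scaleR_scaleC bounded_clinear_scaleC)

lemma bounded_clinear_sum: "bounded_clinear T \<Longrightarrow> T (sum f A) = (\<Sum>a\<in>A. T (f a))"
  by (induction A rule: infinite_finite_induct) (auto simp: bounded_clinear_add bounded_clinear_zero)

lemma bounded_clinear_pos_bound: "bounded_clinear T \<Longrightarrow> \<exists>K>0. \<forall>x. norm (T x) \<le> K * norm x"
proof -
  assume "bounded_clinear T"
  then obtain K where K: "\<And>x. norm (T x) \<le> norm x * K" by (auto simp: bounded_clinear_def)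
  have "norm (T x) \<le> (max K 0 + 1) * norm x" for x
  proof -
    have "norm x * K \<le> norm x * (max K 0 + 1)" by (intro mult_left_mono) auto
    then show ?thesis using K[of x] by (simp add: mult.commute)
  qed
  then show ?thesis by (intro exI[of _ "max K 0 + 1"]) auto
qed

lemma bounded_clinear_continuous: "bounded_clinear T \<Longrightarrow> continuous_on UNIV T"
  by (metis bounded_clinear_pos_bound bounded_clinear_diff lipschitz_imp_continuous)

lemma continuous_on_bounded_clinear [continuous_intros]:
  "bounded_clinear T \<Longrightarrow> continuous_on S f \<Longrightarrow> continuous_on S (\<lambda>x. T (f x))"
  using continuous_on_compose2[OF bounded_clinear_continuous] by blast

lemma bounded_clinear_id: "bounded_clinear id"
  unfolding bounded_clinear_def clinear_def by (auto intro!: exI[of _ 1])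

lemma bounded_clinear_scaleR_combination:
  assumes f: "bounded_clinear f" and g: "bounded_clinear g"
  shows "bounded_clinear (\<lambda>x. a *\<^sub>R f x + b *\<^sub>R g x)"
proof -
  obtain Kf Kg where Kf: "\<And>x. norm (f x) \<le> Kf * norm x" and Kg: "\<And>x. norm (g x) \<le> Kg * norm x"
    using bounded_clinear_pos_bound[OF f] bounded_clinear_pos_bound[OF g] by blast
  have "norm (a *\<^sub>R f x + b *\<^sub>R g x) \<le> norm x * (\<bar>a\<bar> * Kf + \<bar>b\<bar> * Kg)" for x
  proof -
    have "norm (a *\<^sub>R f x + b *\<^sub>R g x) \<le> \<bar>a\<bar> * norm (f x) + \<bar>b\<bar> * norm (g x)"
      by (metis norm_scaleR norm_triangle_ineq)
    also have "\<dots> \<le> \<bar>a\<bar> * (Kf * norm x) + \<bar>b\<bar> * (Kg * norm x)"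
      using Kf[of x] Kg[of x] by (intro add_mono mult_left_mono) auto
    finally show ?thesis by (simp add: algebra_simps)
  qed
  moreover have "clinear (\<lambda>x. a *\<^sub>R f x + b *\<^sub>R g x)"
    unfolding clinear_def
    by (simp add: bounded_clinear_add[OF f] bounded_clinear_add[OF g] bounded_clinear_scaleC[OF f]
        bounded_clinear_scaleC[OF g] scaleR_scaleC_commute scaleC_add_right algebra_simps)
  ultimately show ?thesis unfolding bounded_clinear_def by blast
qed

lemma cinner_cadjoint_left:
  fixes T :: "'a::chilbert_space \<Rightarrow> 'b::complex_inner"
  assumes T: "bounded_clinear T"
  shows "cinner (cadjoint T y) x = cinner y (T x)"
proof -
  obtain K where K: "\<And>x. norm (T x) \<le> K * norm x" using bounded_clinear_pos_bound[OF T] by blast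
  have "\<exists>u. \<forall>x. cinner y (T x) = cinner u x" for y
  proof (rule riesz_representation)
    show "cmod (cinner y (T x)) \<le> norm y * K * norm x" for x
      using cinner_cauchy_schwarz[of y "T x"] mult_left_mono[OF K[of x], of "norm y"]
      by (simp add: mult.assoc)
  qed (simp_all add: bounded_clinear_add[OF T] bounded_clinear_scaleC[OF T] cinner_add_right
      cinner_scaleC_right)
  then have "\<exists>S. \<forall>x y. cinner (S y) x = cinner y (T x)" by metis
  then show ?thesis unfolding cadjoint_def by (rule someI2_ex) blast
qed

lemma cinner_cadjoint_right:
  fixes T :: "'a::chilbert_space \<Rightarrow> 'b::complex_inner"
  assumes "bounded_clinear T"
  shows "cinner x (cadjoint T y) = cinner (T x) y"
  using cinner_cadjoint_left[OF assms, of y x] cinner_commute[of x] cinner_commute[of "T x"] by simp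

section \<open>Extension from dense subspaces\<close>

lemma bounded_bilinear_cinner: "bounded_bilinear (cinner :: 'a::complex_inner \<Rightarrow> 'a \<Rightarrow> complex)"
proof
  fix a a' b b' :: 'a and r :: real
  show "cinner (a + a') b = cinner a b + cinner a' b" by (rule cinner_add_left)
  show "cinner a (b + b') = cinner a b + cinner a b'" by (rule cinner_add_right)
  show "cinner (r *\<^sub>R a) b = r *\<^sub>R cinner a b" by (simp add: cinner_scaleR_left scaleR_conv_of_real)
  show "cinner a (r *\<^sub>R b) = r *\<^sub>R cinner a b" by (simp add: cinner_scaleR_right scaleR_conv_of_real)
  show "\<exists>K. \<forall>a b::'a. cmod (cinner a b) \<le> norm a * norm b * K"
    by (rule exI[of _ 1]) (simp add: cinner_cauchy_schwarz)
qed

lemmas continuous_on_cinner [continuous_intros] =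
  bounded_bilinear.continuous_on[OF bounded_bilinear_cinner]

lemma continuous_on_scaleC [continuous_intros]:
  "continuous_on S f \<Longrightarrow> continuous_on S (\<lambda>x. c *\<^sub>C (f x :: 'a::complex_inner))"
  using continuous_on_compose2[of UNIV "\<lambda>x. c *\<^sub>C x" S f]
    lipschitz_imp_continuous[of "\<lambda>x::'a. c *\<^sub>C x" "cmod c"]
  by (simp add: scaleC_diff_right[symmetric] norm_scaleC_inner)

lemma continuous_eq_on_dense:
  fixes p q :: "'a::topological_space \<Rightarrow> 'b::t2_space"
  assumes "closure S = UNIV" "continuous_on UNIV p" "continuous_on UNIV q" "\<And>x. x \<in> S \<Longrightarrow> p x = q x"
  shows "p x = q x"
  using closure_minimal[of S "{x. p x = q x}"] closed_Collect_eq[OF assms(2,3)] assms(1,4) by blast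

lemma continuous_le_on_dense:
  fixes p q :: "'a::topological_space \<Rightarrow> 'b::linorder_topology"
  assumes "closure S = UNIV" "continuous_on UNIV p" "continuous_on UNIV q" "\<And>x. x \<in> S \<Longrightarrow> p x \<le> q x"
  shows "p x \<le> q x"
  using closure_minimal[of S "{x. p x \<le> q x}"] closed_Collect_le[OF assms(2,3)] assms(1,4) by blast

lemma cinner_ext_dense:
  fixes u1 u2 :: "'a::complex_inner"
  assumes "closure S = UNIV" "\<And>m. m \<in> S \<Longrightarrow> cinner m u1 = cinner m u2"
  shows "u1 = u2"
  by (rule cinner_ext, rule continuous_eq_on_dense[OF assms(1)])
    (auto intro!: continuous_intros assms(2))

lemma continuous_extension_from_dense:
  fixes f :: "'m::real_normed_vector \<Rightarrow> 'b::{real_normed_vector,complete_space}"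
  assumes dense: "closure S = UNIV" and diff: "\<And>x y. x \<in> S \<Longrightarrow> y \<in> S \<Longrightarrow> x - y \<in> S"
    and f_diff: "\<And>x y. x \<in> S \<Longrightarrow> y \<in> S \<Longrightarrow> f (x - y) = f x - f y"
    and bound: "\<And>x. x \<in> S \<Longrightarrow> norm (f x) \<le> K * norm x"
  shows "\<exists>g. continuous_on UNIV g \<and> (\<forall>x\<in>S. g x = f x) \<and> (\<forall>x. norm (g x) \<le> K * norm x)"
proof -
  have "(max K 0)-lipschitz_on S f"
  proof (rule lipschitz_onI)
    fix x y assume "x \<in> S" "y \<in> S"
    then have "dist (f x) (f y) \<le> K * norm (x - y)"
      using f_diff bound diff by (metis dist_norm)
    also have "\<dots> \<le> max K 0 * dist x y" by (simp add: dist_norm mult_right_mono)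
    finally show "dist (f x) (f y) \<le> max K 0 * dist x y" .
  qed simp
  from uniformly_continuous_on_extension_on_closure[OF lipschitz_on_uniformly_continuous[OF this]]
  obtain g where g: "uniformly_continuous_on (closure S) g" "\<And>x. x \<in> S \<Longrightarrow> f x = g x" by metis
  have "continuous_on UNIV g" using uniformly_continuous_imp_continuous[OF g(1)] dense by simp
  moreover have "norm (g x) \<le> K * norm x" for x
    by (rule continuous_le_on_dense[OF dense])
      (auto intro!: continuous_intros \<open>continuous_on UNIV g\<close> simp: bound g(2)[symmetric])
  ultimately show ?thesis using g(2) by metis
qed

lemma continuous_additive_from_dense:
  fixes g :: "'m::real_normed_vector \<Rightarrow> 'b::real_normed_vector"
  assumes dense: "closure S = UNIV" and g: "continuous_on UNIV g"
    and add: "\<And>x y. x \<in> S \<Longrightarrow> y \<in> S \<Longrightarrow> g (x + y) = g x + g y"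
  shows "g (x + y) = g x + g y"
proof -
  have g_shift: "continuous_on UNIV (\<lambda>x. g (x + z))" "continuous_on UNIV (\<lambda>x. g (z + x))" for z
    by (rule continuous_on_compose2[OF g], intro continuous_intros, simp)+
  have add_S: "g (x + y) = g x + g y" if "y \<in> S" for x y
    by (rule continuous_eq_on_dense[OF dense g_shift(1)]) (intro continuous_intros g, simp add: add that)
  show ?thesis
    by (rule continuous_eq_on_dense[OF dense g_shift(2)]) (intro continuous_intros g, rule add_S)
qed

lemma riesz_representation_dense:
  fixes f :: "'m::chilbert_space \<Rightarrow> complex"
  assumes dense: "closure S = UNIV" and S: "csubspace S"
    and add: "\<And>x y. x \<in> S \<Longrightarrow> y \<in> S \<Longrightarrow> f (x + y) = f x + f y"
    and scale: "\<And>c x. x \<in> S \<Longrightarrow> f (c *\<^sub>C x) = c * f x"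
    and bound: "\<And>x. x \<in> S \<Longrightarrow> cmod (f x) \<le> K * norm x" and "0 \<le> K"
  shows "\<exists>u. (\<forall>x\<in>S. f x = cinner u x) \<and> norm u \<le> K"
proof -
  have diff: "f (x - y) = f x - f y" if "x \<in> S" "y \<in> S" for x y
    using add[of x "(- 1) *\<^sub>C y"] scale[of y "- 1"] csubspace_scaleC[OF S that(2), of "- 1"] that
    by (simp add: scaleC_minus1_left)
  obtain g where g: "continuous_on UNIV g" and g_f: "\<And>x. x \<in> S \<Longrightarrow> g x = f x"
    and g_bound: "\<And>x. cmod (g x) \<le> K * norm x"
    using continuous_extension_from_dense[OF dense csubspace_diff[OF S] diff bound] by blast
  have "g (x + y) = g x + g y" for x y
    by (rule continuous_additive_from_dense[OF dense g]) (simp add: g_f add csubspace_add[OF S])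
  moreover have "g (c *\<^sub>C x) = c * g x" for c x
  proof (rule continuous_eq_on_dense[OF dense])
    show "continuous_on UNIV (\<lambda>x. g (c *\<^sub>C x))"
      by (rule continuous_on_compose2[OF g continuous_on_scaleC[OF continuous_on_id]]) simp
  qed (simp_all add: continuous_on_mult_left g g_f scale csubspace_scaleC[OF S])
  ultimately obtain u where u: "\<And>x. g x = cinner u x"
    using riesz_representation[OF _ _ g_bound] by blast
  have "norm u * norm u \<le> K * norm u"
    using g_bound[of u] complex_Re_le_cmod[of "g u"] by (simp add: u Re_cinner_self power2_eq_square)
  then have "norm u \<le> K"
    using \<open>0 \<le> K\<close> by (cases "u = 0") (auto elim: mult_right_le_imp_le)
  moreover have "f x = cinner u x" if "x \<in> S" for x
    using g_f[OF that] u[of x] by simp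
  ultimately show ?thesis by blast
qed

lemma bounded_clinear_extension_from_dense:
  fixes T :: "'m::chilbert_space \<Rightarrow> 'n::chilbert_space"
  assumes dense: "closure S = UNIV" and S: "csubspace S"
    and add: "\<And>x y. x \<in> S \<Longrightarrow> y \<in> S \<Longrightarrow> T (x + y) = T x + T y"
    and scale: "\<And>c x. x \<in> S \<Longrightarrow> T (c *\<^sub>C x) = c *\<^sub>C T x"
    and bound: "\<And>x. x \<in> S \<Longrightarrow> norm (T x) \<le> K * norm x"
  shows "\<exists>T'. bounded_clinear T' \<and> (\<forall>x\<in>S. T' x = T x)"
proof -
  have diff: "T (x - y) = T x - T y" if "x \<in> S" "y \<in> S" for x y
    using add[of x "(- 1) *\<^sub>C y"] scale[of y "- 1"] csubspace_scaleC[OF S that(2), of "- 1"] that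
    by (simp add: scaleC_minus1_left)
  obtain g where g: "continuous_on UNIV g" and g_T: "\<And>x. x \<in> S \<Longrightarrow> g x = T x"
    and g_bound: "\<And>x. norm (g x) \<le> K * norm x"
    using continuous_extension_from_dense[OF dense csubspace_diff[OF S] diff bound] by blast
  have "g (x + y) = g x + g y" for x y
    by (rule continuous_additive_from_dense[OF dense g]) (simp add: g_T add csubspace_add[OF S])
  moreover have "g (c *\<^sub>C x) = c *\<^sub>C g x" for c x
  proof (rule continuous_eq_on_dense[OF dense])
    show "continuous_on UNIV (\<lambda>x. g (c *\<^sub>C x))"
      by (rule continuous_on_compose2[OF g continuous_on_scaleC[OF continuous_on_id]]) simp
  qed (simp_all add: continuous_on_scaleC g g_T scale csubspace_scaleC[OF S])
  ultimately have "bounded_clinear g"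
    unfolding bounded_clinear_def clinear_def using g_bound by (auto simp: mult.commute)
  then show ?thesis using g_T by auto
qed

section \<open>Positive and coercive operators\<close>

lemma positive_op_bounded: "positive_op E \<Longrightarrow> bounded_clinear E"
  and positive_op_nonneg: "positive_op E \<Longrightarrow> cnonneg (cinner x (E x))"
  by (simp_all add: positive_op_def)

lemma positive_op_sesquilinear:
  "positive_op E \<Longrightarrow> nonneg_sesquilinear (+) (*\<^sub>C) (\<lambda>x y. cinner x (E y))"
  using positive_op_bounded positive_op_nonneg
  by unfold_locales (auto simp: bounded_clinear_add bounded_clinear_scaleC cinner_add_left
      cinner_add_right cinner_scaleC_left cinner_scaleC_right)

lemma bounded_clinear_Re_cinner_bound:
  assumes "bounded_clinear E"
  shows "\<exists>K>0. \<forall>x. Re (cinner x (E x)) \<le> K * (norm x)\<^sup>2"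
proof -
  obtain K where "K > 0" and K: "\<And>x. norm (E x) \<le> K * norm x"
    using bounded_clinear_pos_bound[OF assms] by blast
  have "Re (cinner x (E x)) \<le> K * (norm x)\<^sup>2" for x
  proof -
    have "Re (cinner x (E x)) \<le> norm x * norm (E x)"
      using complex_Re_le_cmod cinner_cauchy_schwarz order_trans by blast
    also have "\<dots> \<le> norm x * (K * norm x)" using K[of x] by (intro mult_left_mono) auto
    finally show ?thesis by (simp add: power2_eq_square algebra_simps)
  qed
  then show ?thesis using \<open>K > 0\<close> by blast
qed

text \<open>Cauchy--Schwarz for the form of \<open>E\<close> gives \<open>\<parallel>E x\<parallel>\<^sup>4 \<le> \<langle>E x, E (E x)\<rangle> \<langle>x, E x\<rangle>\<close>,
  and \<open>\<parallel>x\<parallel> \<le> \<parallel>E\<^sup>-\<^sup>1\<parallel> \<parallel>E x\<parallel>\<close>.\<close>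

lemma positive_op_invertible_lower_bound:
  fixes E :: "'m::chilbert_space \<Rightarrow> 'm"
  assumes P: "positive_op E" and "has_bounded_inverse E"
  shows "\<exists>c>0. \<forall>x. c * (norm x)\<^sup>2 \<le> Re (cinner x (E x))"
proof -
  interpret E: nonneg_sesquilinear "(+)" "(*\<^sub>C)" "\<lambda>x y. cinner x (E y)"
    by (rule positive_op_sesquilinear[OF P])
  obtain F where F: "bounded_clinear F" and "F \<circ> E = id"
    using assms(2) by (auto simp: has_bounded_inverse_def)
  then have F_E: "F (E x) = x" for x by (metis comp_apply id_apply)
  obtain KE where "KE > 0" and KE: "\<And>x. Re (cinner x (E x)) \<le> KE * (norm x)\<^sup>2"
    using bounded_clinear_Re_cinner_bound[OF positive_op_bounded[OF P]] by blast
  obtain KF where "KF > 0" and KF: "\<And>x. norm (F x) \<le> KF * norm x"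
    using bounded_clinear_pos_bound[OF F] by blast
  have "(1 / (KF\<^sup>2 * KE)) * (norm x)\<^sup>2 \<le> Re (cinner x (E x))" for x
  proof -
    let ?y = "E x" and ?q = "Re (cinner x (E x))"
    have "cmod (cinner ?y ?y) = (norm ?y)\<^sup>2" unfolding cinner_self norm_of_real by simp
    then have "((norm ?y)\<^sup>2)\<^sup>2 = (cmod (cinner ?y ?y))\<^sup>2" by simp
    also have "\<dots> \<le> Re (cinner ?y (E ?y)) * ?q" using E.cauchy_schwarz[of ?y x] by simp
    also have "\<dots> \<le> (KE * (norm ?y)\<^sup>2) * ?q"
      using KE[of ?y] E.Re_self_nonneg[of x] by (rule mult_right_mono)
    finally have "(norm ?y)\<^sup>2 \<le> KE * ?q"
      using E.Re_self_nonneg[of x] \<open>KE > 0\<close>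
      by (cases "norm ?y = 0") (auto simp: power2_eq_square mult_le_cancel_right algebra_simps)
    moreover have "(norm x)\<^sup>2 \<le> KF\<^sup>2 * (norm ?y)\<^sup>2"
      using power_mono[OF KF[of ?y], of 2] by (simp add: F_E power_mult_distrib)
    ultimately have "(norm x)\<^sup>2 \<le> KF\<^sup>2 * (KE * ?q)"
      by (meson mult_left_mono order_trans zero_le_power2)
    then show ?thesis using \<open>KE > 0\<close> \<open>KF > 0\<close> by (simp add: field_simps)
  qed
  then show ?thesis using \<open>KE > 0\<close> \<open>KF > 0\<close> by (intro exI[of _ "1 / (KF\<^sup>2 * KE)"]) auto
qed

lemma coercive_norm_lower_bound:
  assumes "0 < s" and coercive: "\<And>x. s * (norm x)\<^sup>2 \<le> Re (cinner x (E x))"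
  shows "s * norm x \<le> norm (E x)"
proof (cases "x = 0")
  case False
  have "s * (norm x)\<^sup>2 \<le> norm x * norm (E x)"
    using coercive[of x] complex_Re_le_cmod[of "cinner x (E x)"] cinner_cauchy_schwarz[of x "E x"]
    by linarith
  then have "(s * norm x) * norm x \<le> norm (E x) * norm x" by (simp add: power2_eq_square algebra_simps)
  then show ?thesis using False by (simp add: mult_le_cancel_right)
qed simp

lemma closed_range_bounded_below:
  fixes E :: "'a::chilbert_space \<Rightarrow> 'b::complex_inner"
  assumes E: "bounded_clinear E" and "0 < s" and below: "\<And>x. s * norm x \<le> norm (E x)"
  shows "closed (range E)"
  unfolding closed_sequential_limits
proof (intro allI impI, elim conjE)
  fix y l assume "\<forall>n. y n \<in> range E" and "y \<longlonglongrightarrow> l"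
  then have "\<forall>n. \<exists>x. y n = E x" by blast
  then obtain z where z: "\<And>n. y n = E (z n)" by metis
  have "Cauchy z"
  proof (rule CauchyI)
    fix e :: real assume "0 < e"
    obtain M where M: "\<And>m n. m \<ge> M \<Longrightarrow> n \<ge> M \<Longrightarrow> norm (y m - y n) < s * e"
      using LIMSEQ_imp_Cauchy[OF \<open>y \<longlonglongrightarrow> l\<close>] \<open>0 < s\<close> \<open>0 < e\<close>
      unfolding Cauchy_iff by (metis mult_pos_pos)
    have "norm (z m - z n) < e" if "m \<ge> M" "n \<ge> M" for m n
    proof -
      have "s * norm (z m - z n) \<le> norm (y m - y n)"
        using below[of "z m - z n"] by (simp add: z bounded_clinear_diff[OF E])
      also have "\<dots> < s * e" using M[OF that] .
      finally show ?thesis using \<open>0 < s\<close> by simp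
    qed
    then show "\<exists>M. \<forall>m\<ge>M. \<forall>n\<ge>M. norm (z m - z n) < e" by blast
  qed
  then obtain \<zeta> where "z \<longlonglongrightarrow> \<zeta>" using Cauchy_convergent_iff convergent_def by blast
  then have "(\<lambda>n. E (z n)) \<longlonglongrightarrow> E \<zeta>"
    by (intro continuous_on_tendsto_compose[OF bounded_clinear_continuous[OF E]]) auto
  then have "y \<longlonglongrightarrow> E \<zeta>" by (simp add: z[symmetric])
  then show "l \<in> range E" using \<open>y \<longlonglongrightarrow> l\<close> LIMSEQ_unique by blast
qed

text \<open>A coercive operator is injective and has closed range, and the orthogonal complement
  of its range is trivial, again by coercivity.\<close>

lemma coercive_imp_bounded_inverse:
  fixes E :: "'m::chilbert_space \<Rightarrow> 'm"
  assumes E: "bounded_clinear E" and "0 < s" and coercive: "\<And>x. s * (norm x)\<^sup>2 \<le> Re (cinner x (E x))"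
  shows "has_bounded_inverse E"
proof -
  note below = coercive_norm_lower_bound[OF \<open>0 < s\<close> coercive]
  have inj: "x = y" if "E x = E y" for x y
    using below[of "x - y"] that \<open>0 < s\<close> by (simp add: bounded_clinear_diff[OF E] mult_le_0_iff)
  have surj: "\<exists>x. E x = y" for y
  proof -
    have "csubspace (range E)"
      using bounded_clinear_zero[OF E, symmetric]
      by (auto simp: csubspace_def simp flip: bounded_clinear_add[OF E] bounded_clinear_scaleC[OF E])
    then obtain p where "p \<in> range E" and orth: "\<And>v. v \<in> range E \<Longrightarrow> cinner v (y - p) = 0"
      using orthogonal_projection_exists[OF closed_range_bounded_below[OF E \<open>0 < s\<close> below]] by blast
    have "cinner (y - p) (E (y - p)) = 0" using orth[of "E (y - p)"] cinner_commute[of "y - p"] by simp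
    then have "y - p = 0" using coercive[of "y - p"] \<open>0 < s\<close> by (simp add: mult_le_0_iff)
    then show ?thesis using \<open>p \<in> range E\<close> by auto
  qed
  define F where "F y = (SOME x. E x = y)" for y
  have E_F: "E (F y) = y" for y unfolding F_def using surj[of y] by (rule someI_ex)
  have "bounded_clinear F"
    unfolding bounded_clinear_def clinear_def
  proof (intro conjI allI)
    show "F (x + y) = F x + F y" for x y using inj by (metis E_F bounded_clinear_add[OF E])
    show "F (c *\<^sub>C x) = c *\<^sub>C F x" for c x using inj by (metis E_F bounded_clinear_scaleC[OF E])
    have "norm (F x) \<le> norm x * (1 / s)" for x
      using below[of "F x"] \<open>0 < s\<close> by (simp add: E_F field_simps)
    then show "\<exists>K. \<forall>x. norm (F x) \<le> norm x * K" by blast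
  qed
  then show ?thesis unfolding has_bounded_inverse_def
    using E_F inj by (intro exI[of _ F]) (auto simp: fun_eq_iff)
qed

section \<open>Completely positive maps and their dilations\<close>

lemma star_rep_bounded: "unital_star_rep \<pi> \<Longrightarrow> bounded_clinear (\<pi> a)"
  and star_rep_add: "unital_star_rep \<pi> \<Longrightarrow> \<pi> (a + b) v = \<pi> a v + \<pi> b v"
  and star_rep_scaleC: "unital_star_rep \<pi> \<Longrightarrow> \<pi> (c *\<^sub>C a) v = c *\<^sub>C \<pi> a v"
  and star_rep_mult: "unital_star_rep \<pi> \<Longrightarrow> \<pi> (a * b) v = \<pi> a (\<pi> b v)"
  and star_rep_invol: "unital_star_rep \<pi> \<Longrightarrow> \<pi> (invol a) = cadjoint (\<pi> a)"
  and star_rep_one: "unital_star_rep \<pi> \<Longrightarrow> \<pi> 1 v = v"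
  by (simp_all add: unital_star_rep_def)

lemma star_rep_sum: "unital_star_rep \<pi> \<Longrightarrow> \<pi> (sum f A) v = (\<Sum>a\<in>A. \<pi> (f a) v)"
  using star_rep_scaleC[of \<pi> 0 0 v]
  by (induction A rule: infinite_finite_induct) (auto simp: star_rep_add)

lemma UCP_bounded: "\<Theta> \<in> UCP \<Longrightarrow> bounded_clinear (\<Theta> a)"
  and UCP_add: "\<Theta> \<in> UCP \<Longrightarrow> \<Theta> (a + b) v = \<Theta> a v + \<Theta> b v"
  and UCP_scaleC: "\<Theta> \<in> UCP \<Longrightarrow> \<Theta> (c *\<^sub>C a) v = c *\<^sub>C \<Theta> a v"
  and UCP_one: "\<Theta> \<in> UCP \<Longrightarrow> \<Theta> 1 v = v"
  and UCP_completely_positive: "\<Theta> \<in> UCP \<Longrightarrow> completely_positive \<Theta>"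
  by (simp_all add: UCP_def op_valued_linear_def)

text \<open>Since \<open>G\<close> commutes with \<open>\<pi>\<close>, the amplified form at \<open>Y\<^sup>* Y\<close> is the sum over \<open>k\<close> of
  \<open>\<langle>x\<^sub>k, G x\<^sub>k\<rangle>\<close> with \<open>x\<^sub>k = \<Sum>\<^sub>i \<pi>(Y\<^sub>k\<^sub>i) J \<xi>\<^sub>i\<close>.\<close>

lemma completely_positive_compression:
  fixes \<Theta> :: "'a::cstar_algebra \<Rightarrow> 'h::chilbert_space \<Rightarrow> 'h" and \<pi> :: "'a \<Rightarrow> 'm::chilbert_space \<Rightarrow> 'm"
  assumes \<pi>: "unital_star_rep \<pi>" and G: "bounded_clinear G"
    and G_commute: "\<And>a x. G (\<pi> a x) = \<pi> a (G x)" and G_nonneg: "\<And>x. cnonneg (cinner x (G x))"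
    and "0 \<le> c" and \<Theta>: "\<And>x a w. cinner x (\<Theta> a w) = complex_of_real c * cinner (J x) (\<pi> a (G (J w)))"
  shows "completely_positive \<Theta>"
  unfolding completely_positive_def
proof (intro allI)
  fix n :: nat and Y :: "nat \<Rightarrow> nat \<Rightarrow> 'a" and \<xi> :: "nat \<Rightarrow> 'h"
  define u where "u i = J (\<xi> i)" for i
  have "(\<Sum>i<n. \<Sum>j<n. cinner (u i) (\<pi> (\<Sum>k<n. invol (Y k i) * Y k j) (G (u j))))
      = (\<Sum>i<n. \<Sum>j<n. \<Sum>k<n. cinner (\<pi> (Y k i) (u i)) (G (\<pi> (Y k j) (u j))))"
    by (simp add: star_rep_sum[OF \<pi>] cinner_sum_right star_rep_mult[OF \<pi>] star_rep_invol[OF \<pi>]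
        cinner_cadjoint_right[OF star_rep_bounded[OF \<pi>]] G_commute)
  also have "\<dots> = (\<Sum>i<n. \<Sum>k<n. \<Sum>j<n. cinner (\<pi> (Y k i) (u i)) (G (\<pi> (Y k j) (u j))))"
    by (rule sum.cong[OF refl], rule sum.swap)
  also have "\<dots> = (\<Sum>k<n. \<Sum>i<n. \<Sum>j<n. cinner (\<pi> (Y k i) (u i)) (G (\<pi> (Y k j) (u j))))"
    by (rule sum.swap)
  also have "\<dots> = (\<Sum>k<n. cinner (\<Sum>i<n. \<pi> (Y k i) (u i)) (G (\<Sum>j<n. \<pi> (Y k j) (u j))))"
    by (simp add: cinner_sum_left cinner_sum_right bounded_clinear_sum[OF G])
      (rule sum.cong[OF refl], rule sum.swap)
  finally have "cnonneg (\<Sum>i<n. \<Sum>j<n. cinner (u i) (\<pi> (\<Sum>k<n. invol (Y k i) * Y k j) (G (u j))))"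
    using G_nonneg by (simp add: cnonneg_sum)
  then have "cnonneg (complex_of_real c *
      (\<Sum>i<n. \<Sum>j<n. cinner (u i) (\<pi> (\<Sum>k<n. invol (Y k i) * Y k j) (G (u j)))))"
    by (rule cnonneg_of_real_mult[OF \<open>0 \<le> c\<close>])
  then show "cnonneg (\<Sum>i<n. \<Sum>j<n. cinner (\<xi> i) (\<Theta> (\<Sum>k<n. invol (Y k i) * Y k j) (\<xi> j)))"
    by (simp add: \<Theta> u_def sum_distrib_left)
qed

lemma affine_combination_in_UCP:
  assumes "\<Theta>1 \<in> UCP" "\<Theta>2 \<in> UCP" and "\<alpha> + \<beta> = 1"
    and "completely_positive (\<lambda>a v. \<alpha> *\<^sub>R \<Theta>1 a v + \<beta> *\<^sub>R \<Theta>2 a v)"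
  shows "(\<lambda>a v. \<alpha> *\<^sub>R \<Theta>1 a v + \<beta> *\<^sub>R \<Theta>2 a v) \<in> UCP"
  unfolding UCP_def op_valued_linear_def
proof (intro CollectI conjI allI ext)
  show "bounded_clinear (\<lambda>v. \<alpha> *\<^sub>R \<Theta>1 a v + \<beta> *\<^sub>R \<Theta>2 a v)" for a
    using assms(1,2) by (intro bounded_clinear_scaleR_combination UCP_bounded)
  show "\<alpha> *\<^sub>R \<Theta>1 (a + b) v + \<beta> *\<^sub>R \<Theta>2 (a + b) v
      = (\<alpha> *\<^sub>R \<Theta>1 a v + \<beta> *\<^sub>R \<Theta>2 a v) + (\<alpha> *\<^sub>R \<Theta>1 b v + \<beta> *\<^sub>R \<Theta>2 b v)" for a b v
    using assms(1,2) by (simp add: UCP_add algebra_simps)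
  show "\<alpha> *\<^sub>R \<Theta>1 (c *\<^sub>C a) v + \<beta> *\<^sub>R \<Theta>2 (c *\<^sub>C a) v = c *\<^sub>C (\<alpha> *\<^sub>R \<Theta>1 a v + \<beta> *\<^sub>R \<Theta>2 a v)"
    for c a v
    using assms(1,2) by (simp add: UCP_scaleC scaleC_add_right scaleR_scaleC_commute)
  show "\<alpha> *\<^sub>R \<Theta>1 1 v + \<beta> *\<^sub>R \<Theta>2 1 v = id v" for v
    using assms(1-3) by (simp add: UCP_one scaleR_add_left[symmetric])
qed (rule assms(4))

text \<open>The witness \<open>\<Theta>' = (\<Theta>\<^sub>1 - r \<Theta>\<^sub>2) / (1 - r)\<close> is the compression of
  \<open>(G\<^sub>1 - r G\<^sub>2) / (1 - r)\<close>, a positive element of the commutant.\<close>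

lemma conv_le_if_dominated_in_commutant:
  fixes \<Theta>1 \<Theta>2 :: "'a::cstar_algebra \<Rightarrow> 'h::chilbert_space \<Rightarrow> 'h"
    and \<pi> :: "'a \<Rightarrow> 'm::chilbert_space \<Rightarrow> 'm" and J :: "'h \<Rightarrow> 'm"
  assumes \<pi>: "unital_star_rep \<pi>" and J: "bounded_clinear J"
    and UCP: "\<Theta>1 \<in> UCP" "\<Theta>2 \<in> UCP"
    and \<Theta>1: "\<And>a. \<Theta>1 a = cadjoint J \<circ> \<pi> a \<circ> G1 \<circ> J"
    and \<Theta>2: "\<And>a. \<Theta>2 a = cadjoint J \<circ> \<pi> a \<circ> G2 \<circ> J"
    and G: "bounded_clinear G1" "bounded_clinear G2"
    and G_commute: "\<And>a x. G1 (\<pi> a x) = \<pi> a (G1 x)" "\<And>a x. G2 (\<pi> a x) = \<pi> a (G2 x)"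
    and r: "0 < r" "r < 1"
    and dominated: "\<And>x. cnonneg (cinner x (G1 x - r *\<^sub>R G2 x))"
  shows "conv_le UCP \<Theta>2 \<Theta>1"
proof -
  define \<Theta>' where "\<Theta>' a v = (1 / (1 - r)) *\<^sub>R \<Theta>1 a v + (- r / (1 - r)) *\<^sub>R \<Theta>2 a v" for a v
  define G where "G x = 1 *\<^sub>R G1 x + (- r) *\<^sub>R G2 x" for x
  have G_bounded: "bounded_clinear G" unfolding G_def using G by (rule bounded_clinear_scaleR_combination)
  have "G (\<pi> a x) = \<pi> a (G x)" for a x
    using star_rep_bounded[OF \<pi>, of a] G_commute
    by (simp add: G_def bounded_clinear_diff bounded_clinear_scaleR)
  moreover have "cnonneg (cinner x (G x))" for x using dominated[of x] by (simp add: G_def)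
  moreover have "cinner x (\<Theta>' a w) = complex_of_real (1 / (1 - r)) * cinner (J x) (\<pi> a (G (J w)))"
    for x a w
  proof -
    have "cinner x (\<Theta>' a w)
        = complex_of_real (1 / (1 - r)) * (cinner x (\<Theta>1 a w) - complex_of_real r * cinner x (\<Theta>2 a w))"
      by (simp add: \<Theta>'_def cinner_diff_right cinner_scaleR_right diff_divide_distrib right_diff_distrib)
    also have "cinner x (\<Theta>1 a w) - complex_of_real r * cinner x (\<Theta>2 a w) = cinner (J x) (\<pi> a (G (J w)))"
      using star_rep_bounded[OF \<pi>, of a]
      by (simp add: \<Theta>1 \<Theta>2 G_def cinner_cadjoint_right[OF J] bounded_clinear_diff bounded_clinear_scaleR
          cinner_diff_right cinner_scaleR_right)
    finally show ?thesis .
  qed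
  ultimately have "completely_positive \<Theta>'"
    using r
    by (intro completely_positive_compression[OF \<pi> G_bounded, where c = "1 / (1 - r)" and J = J])
      auto
  then have "\<Theta>' \<in> UCP"
    unfolding \<Theta>'_def using UCP r by (intro affine_combination_in_UCP) (auto simp: field_simps)
  moreover have "\<Theta>1 = (\<lambda>a v. r *\<^sub>R \<Theta>2 a v + (1 - r) *\<^sub>R \<Theta>' a v)"
    using r by (intro ext) (simp add: \<Theta>'_def scaleR_add_right scaleR_diff_right)
  ultimately show ?thesis unfolding conv_le_def using r by (intro bexI[of _ \<Theta>'] exI[of _ r]) auto
qed

lemma cnonneg_cinner_diff:
  assumes "Im (cinner x (G x)) = 0" "Im (cinner x (H x)) = 0"
    and "r * Re (cinner x (H x)) \<le> Re (cinner x (G x))"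
  shows "cnonneg (cinner x (G x - r *\<^sub>R H x))"
  using assms by (simp add: cnonneg_def cinner_diff_right cinner_scaleR_right)

lemma min_stinespring_rep: "min_stinespring \<Psi> \<pi> J \<Longrightarrow> unital_star_rep \<pi>"
  and min_stinespring_bounded: "min_stinespring \<Psi> \<pi> J \<Longrightarrow> bounded_clinear J"
  and min_stinespring_eq: "min_stinespring \<Psi> \<pi> J \<Longrightarrow> \<Psi> a = cadjoint J \<circ> \<pi> a \<circ> J"
  by (simp_all add: min_stinespring_def)

text \<open>An invertible positive \<open>E\<close> satisfies \<open>c \<le> E \<le> K\<close>, so \<open>1 - E/(K + 1)\<close> and \<open>E - min (1/2) c\<close>
  are positive elements of the commutant.\<close>

lemma conv_eq_if_invertible_in_F_set:
  fixes \<Phi> \<Psi> :: "'a::cstar_algebra \<Rightarrow> 'h::chilbert_space \<Rightarrow> 'h"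
    and \<pi> :: "'a \<Rightarrow> 'm::chilbert_space \<Rightarrow> 'm" and J :: "'h \<Rightarrow> 'm"
  assumes UCP: "\<Phi> \<in> UCP" "\<Psi> \<in> UCP" and dilation: "min_stinespring \<Psi> \<pi> J"
    and "E \<in> F_set \<pi> J" and "has_bounded_inverse E"
    and \<Phi>: "\<And>a. \<Phi> a = cadjoint J \<circ> \<pi> a \<circ> E \<circ> J"
  shows "conv_eq UCP \<Phi> \<Psi>"
proof -
  note \<pi> = min_stinespring_rep[OF dilation] and J = min_stinespring_bounded[OF dilation]
  have E: "positive_op E" and E_commute: "E (\<pi> a x) = \<pi> a (E x)" for a x
    using \<open>E \<in> F_set \<pi> J\<close> by (auto simp: F_set_def fun_eq_iff)
  have \<Psi>: "\<Psi> a = cadjoint J \<circ> \<pi> a \<circ> id \<circ> J" for a using min_stinespring_eq[OF dilation] by simp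
  have Im_E: "Im (cinner x (E x)) = 0" and Im_id: "Im (cinner x (id x)) = 0" for x
    using positive_op_nonneg[OF E, of x] by (auto simp: cnonneg_def cinner_self)
  obtain K where "K > 0" and K: "\<And>x. Re (cinner x (E x)) \<le> K * (norm x)\<^sup>2"
    using bounded_clinear_Re_cinner_bound[OF positive_op_bounded[OF E]] by blast
  define r where "r = 1 / (K + 1)"
  have r: "0 < r" "r < 1" "r * K \<le> 1" using \<open>K > 0\<close> by (simp_all add: r_def field_simps)
  have "cnonneg (cinner x (id x - r *\<^sub>R E x))" for x
  proof (rule cnonneg_cinner_diff[OF Im_id Im_E])
    have "r * Re (cinner x (E x)) \<le> (r * K) * (norm x)\<^sup>2"
      using mult_left_mono[OF K[of x], of r] r by simp
    also have "\<dots> \<le> (norm x)\<^sup>2" using mult_right_mono[OF r(3), of "(norm x)\<^sup>2"] by simp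
    finally show "r * Re (cinner x (E x)) \<le> Re (cinner x (id x))" by (simp add: Re_cinner_self)
  qed
  then have "conv_le UCP \<Phi> \<Psi>"
    using conv_le_if_dominated_in_commutant[OF \<pi> J UCP(2,1) \<Psi> \<Phi> bounded_clinear_id
          positive_op_bounded[OF E]] E_commute r(1,2) by simp
  obtain c where "c > 0" and c: "\<And>x. c * (norm x)\<^sup>2 \<le> Re (cinner x (E x))"
    using positive_op_invertible_lower_bound[OF E \<open>has_bounded_inverse E\<close>] by blast
  define s where "s = min (1/2) c"
  have s: "0 < s" "s < 1" "s \<le> c" using \<open>c > 0\<close> by (auto simp: s_def)
  have "cnonneg (cinner x (E x - s *\<^sub>R id x))" for x
    using mult_right_mono[OF s(3), of "(norm x)\<^sup>2"] c[of x]
    by (intro cnonneg_cinner_diff[OF Im_E Im_id]) (simp add: Re_cinner_self)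
  then have "conv_le UCP \<Psi> \<Phi>"
    using conv_le_if_dominated_in_commutant[OF \<pi> J UCP \<Phi> \<Psi> positive_op_bounded[OF E]
          bounded_clinear_id] E_commute s(1,2) by simp
  with \<open>conv_le UCP \<Phi> \<Psi>\<close> show ?thesis by (simp add: conv_eq_def)
qed

section \<open>Formal sums and the kernel form of a completely positive map\<close>

text \<open>A list \<open>[(a\<^sub>1, v\<^sub>1), \<dots>, (a\<^sub>n, v\<^sub>n)]\<close> stands for the formal sum \<open>\<Sum>\<^sub>i a\<^sub>i \<otimes> v\<^sub>i\<close> in
  \<open>\<A> \<otimes> \<H>\<close>; \<open>dilation_map \<pi> J\<close> sends it to \<open>\<Sum>\<^sub>i \<pi>(a\<^sub>i) J v\<^sub>i\<close>, and \<open>kernel_form \<Phi>\<close> is the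
  semi-inner product \<open>\<langle>a \<otimes> v, b \<otimes> w\<rangle> = \<langle>v, \<Phi>(a\<^sup>* b) w\<rangle>\<close> of the Stinespring construction.\<close>

definition dilation_map ::
  "('a::cstar_algebra \<Rightarrow> 'm::chilbert_space \<Rightarrow> 'm) \<Rightarrow> ('h::chilbert_space \<Rightarrow> 'm) \<Rightarrow> ('a \<times> 'h) list \<Rightarrow> 'm"
  where "dilation_map \<pi> J l = (\<Sum>p\<leftarrow>l. \<pi> (fst p) (J (snd p)))"

definition kernel_form ::
  "('a::cstar_algebra \<Rightarrow> 'h::chilbert_space \<Rightarrow> 'h) \<Rightarrow> ('a \<times> 'h) list \<Rightarrow> ('a \<times> 'h) list \<Rightarrow> complex"
  where "kernel_form \<Phi> l l' = (\<Sum>p\<leftarrow>l. \<Sum>q\<leftarrow>l'. cinner (snd p) (\<Phi> (invol (fst p) * fst q) (snd q)))"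

definition formal_scaleC :: "complex \<Rightarrow> ('a \<times> 'h::complex_vector) list \<Rightarrow> ('a \<times> 'h) list"
  where "formal_scaleC c l = map (\<lambda>p. (fst p, c *\<^sub>C snd p)) l"

definition formal_mult :: "'a::cstar_algebra \<Rightarrow> ('a \<times> 'h) list \<Rightarrow> ('a \<times> 'h) list"
  where "formal_mult c l = map (\<lambda>p. (c * fst p, snd p)) l"

lemma dilation_map_Nil [simp]: "dilation_map \<pi> J [] = 0"
  and dilation_map_single: "dilation_map \<pi> J [(a, v)] = \<pi> a (J v)"
  and dilation_map_append: "dilation_map \<pi> J (l1 @ l2) = dilation_map \<pi> J l1 + dilation_map \<pi> J l2"
  by (simp_all add: dilation_map_def)

lemma sum_list_swap: "(\<Sum>x\<leftarrow>xs. \<Sum>y\<leftarrow>ys. f x y) = (\<Sum>y\<leftarrow>ys. \<Sum>x\<leftarrow>xs. (f x y::'b::comm_monoid_add))"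
  by (induction xs) (auto simp: sum_list_addf)

context
  fixes \<pi> :: "'a::cstar_algebra \<Rightarrow> 'm::chilbert_space \<Rightarrow> 'm" and J :: "'h::chilbert_space \<Rightarrow> 'm"
  assumes \<pi>: "unital_star_rep \<pi>" and J: "bounded_clinear J"
begin

lemma dilation_map_formal_scaleC: "dilation_map \<pi> J (formal_scaleC c l) = c *\<^sub>C dilation_map \<pi> J l"
  by (induction l) (auto simp: dilation_map_def formal_scaleC_def bounded_clinear_scaleC[OF J]
      bounded_clinear_scaleC[OF star_rep_bounded[OF \<pi>]] scaleC_add_right)

lemma dilation_map_formal_mult: "dilation_map \<pi> J (formal_mult c l) = \<pi> c (dilation_map \<pi> J l)"
  by (induction l) (auto simp: dilation_map_def formal_mult_def star_rep_mult[OF \<pi>]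
      bounded_clinear_add[OF star_rep_bounded[OF \<pi>]] bounded_clinear_zero[OF star_rep_bounded[OF \<pi>]])

lemma csubspace_range_dilation_map: "csubspace (range (dilation_map \<pi> J))"
  unfolding csubspace_def
proof (intro conjI ballI allI)
  show "0 \<in> range (dilation_map \<pi> J)" using rangeI[of "dilation_map \<pi> J" "[]"] by simp
  show "x + y \<in> range (dilation_map \<pi> J)"
    if "x \<in> range (dilation_map \<pi> J)" "y \<in> range (dilation_map \<pi> J)" for x y
    using that by (auto simp flip: dilation_map_append)
  show "c *\<^sub>C x \<in> range (dilation_map \<pi> J)" if "x \<in> range (dilation_map \<pi> J)" for c x
    using that by (auto simp flip: dilation_map_formal_scaleC)
qed

lemma range_dilation_map_dense:
  assumes "closure (cspan {\<pi> a (J v) | a v. True}) = UNIV"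
  shows "closure (range (dilation_map \<pi> J)) = UNIV"
proof -
  have "x \<in> range (dilation_map \<pi> J)" if "finite F" "F \<subseteq> {\<pi> a (J v) | a v. True}"
    and "x = (\<Sum>v\<in>F. c v *\<^sub>C v)" for F c x
    using that
  proof (induction F arbitrary: x rule: finite_induct)
    case (insert w F)
    then obtain a v where "w = \<pi> a (J v)" by blast
    then have "c w *\<^sub>C w = dilation_map \<pi> J [(a, c w *\<^sub>C v)]"
      by (simp add: dilation_map_single bounded_clinear_scaleC[OF J]
          bounded_clinear_scaleC[OF star_rep_bounded[OF \<pi>]])
    moreover have "(\<Sum>v\<in>F. c v *\<^sub>C v) \<in> range (dilation_map \<pi> J)" using insert by blast
    ultimately show ?case
      using insert csubspace_add[OF csubspace_range_dilation_map] by auto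
  qed (simp add: csubspace_range_dilation_map[unfolded csubspace_def])
  then have "cspan {\<pi> a (J v) | a v. True} \<subseteq> range (dilation_map \<pi> J)"
    unfolding cspan_def by blast
  then show ?thesis using closure_mono assms by blast
qed

lemma kernel_form_compression:
  assumes "\<And>a. \<Psi> a = cadjoint J \<circ> \<pi> a \<circ> J"
  shows "kernel_form \<Psi> l l' = cinner (dilation_map \<pi> J l) (dilation_map \<pi> J l')"
proof -
  have "cinner v (\<Psi> (invol a * b) w) = cinner (\<pi> a (J v)) (\<pi> b (J w))" for v w a b
    by (simp add: assms cinner_cadjoint_right[OF J] star_rep_mult[OF \<pi>] star_rep_invol[OF \<pi>]
        cinner_cadjoint_right[OF star_rep_bounded[OF \<pi>]])
  then show ?thesis
    by (simp add: kernel_form_def dilation_map_def cinner_sum_list_left cinner_sum_list_right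
        sum_list_swap[of _ l'])
qed

end

lemma kernel_form_append_left: "kernel_form \<Phi> (l1 @ l2) l = kernel_form \<Phi> l1 l + kernel_form \<Phi> l2 l"
  and kernel_form_append_right: "kernel_form \<Phi> l (l1 @ l2) = kernel_form \<Phi> l l1 + kernel_form \<Phi> l l2"
  by (simp_all add: kernel_form_def sum_list_addf)

lemma kernel_form_formal_scaleC_left: "kernel_form \<Phi> (formal_scaleC c l) l' = cnj c * kernel_form \<Phi> l l'"
  by (simp add: kernel_form_def formal_scaleC_def o_def cinner_scaleC_left sum_list_const_mult)

lemma kernel_form_formal_scaleC_right:
  "\<Phi> \<in> UCP \<Longrightarrow> kernel_form \<Phi> l (formal_scaleC c l') = c * kernel_form \<Phi> l l'"
  by (simp add: kernel_form_def formal_scaleC_def o_def UCP_bounded bounded_clinear_scaleC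
      cinner_scaleC_right sum_list_const_mult)

lemma kernel_form_formal_mult:
  "kernel_form \<Phi> (formal_mult c l) l' = kernel_form \<Phi> l (formal_mult (invol c) l')"
  by (simp add: kernel_form_def formal_mult_def o_def invol_mult mult.assoc)

lemma kernel_form_single: "kernel_form \<Phi> [(a, v)] [(b, w)] = cinner v (\<Phi> (invol a * b) w)"
  by (simp add: kernel_form_def)

lemma kernel_form_scaleR_combination:
  "kernel_form (\<lambda>a v. t *\<^sub>R \<Phi> a v + u *\<^sub>R \<Psi> a v) l l'
    = complex_of_real t * kernel_form \<Phi> l l' + complex_of_real u * kernel_form \<Psi> l l'"
  by (simp add: kernel_form_def cinner_add_right cinner_scaleR_right sum_list_addf sum_list_const_mult)

lemma invol_one [simp]: "invol (1::'a::cstar_algebra) = 1"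
  by (metis invol_invol invol_mult mult_1_right)

text \<open>The Gram matrix of a formal sum \<open>l\<close> is \<open>Y\<^sup>* Y\<close> for the matrix \<open>Y\<close> whose first row lists
  the algebra entries of \<open>l\<close> and whose other rows vanish.\<close>

lemma kernel_form_nonneg:
  assumes "completely_positive \<Phi>"
  shows "cnonneg (kernel_form \<Phi> l l)"
proof -
  let ?n = "length l"
  define Y where "Y k i = (if k = 0 then fst (l ! i) else 0)" for k i :: nat
  define \<xi> where "\<xi> i = snd (l ! i)" for i
  have "(\<Sum>k<?n. invol (Y k i) * Y k j) = invol (fst (l ! i)) * fst (l ! j)" if i: "i < ?n" for i j
  proof -
    obtain n' where n': "?n = Suc n'" using i by (cases ?n) simp_all
    show ?thesis unfolding n' sum.lessThan_Suc_shift by (simp add: Y_def)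
  qed
  then have "kernel_form \<Phi> l l
      = (\<Sum>i<?n. \<Sum>j<?n. cinner (\<xi> i) (\<Phi> (\<Sum>k<?n. invol (Y k i) * Y k j) (\<xi> j)))"
    by (simp add: kernel_form_def sum_list_sum_nth atLeast0LessThan \<xi>_def)
  moreover have "cnonneg (\<Sum>i<?n. \<Sum>j<?n. cinner (\<xi> i) (\<Phi> (\<Sum>k<?n. invol (Y k i) * Y k j) (\<xi> j)))"
    using assms unfolding completely_positive_def by blast
  ultimately show ?thesis by simp
qed

lemma UCP_kernel_form_sesquilinear:
  "\<Phi> \<in> UCP \<Longrightarrow> nonneg_sesquilinear (@) formal_scaleC (kernel_form \<Phi>)"
  by unfold_locales (simp_all add: kernel_form_append_left kernel_form_append_right
      kernel_form_formal_scaleC_left kernel_form_formal_scaleC_right kernel_form_nonneg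
      UCP_completely_positive)

section \<open>The Radon--Nikodym derivative of an equivalent map\<close>

lemma conv_le_kernel_form_bound:
  assumes "conv_le UCP \<Phi> \<Psi>"
  shows "\<exists>t>0. \<forall>l. t * Re (kernel_form \<Phi> l l) \<le> Re (kernel_form \<Psi> l l)"
proof -
  obtain \<Psi>' t where "\<Psi>' \<in> UCP" "0 < t" "t \<le> 1"
    and \<Psi>: "\<Psi> = (\<lambda>a v. t *\<^sub>R \<Phi> a v + (1 - t) *\<^sub>R \<Psi>' a v)"
    using assms unfolding conv_le_def by blast
  have "t * Re (kernel_form \<Phi> l l) \<le> Re (kernel_form \<Psi> l l)" for l
    using kernel_form_nonneg[OF UCP_completely_positive[OF \<open>\<Psi>' \<in> UCP\<close>], of l] \<open>t \<le> 1\<close>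
    by (simp add: \<Psi> kernel_form_scaleR_combination cnonneg_def)
  then show ?thesis using \<open>0 < t\<close> by blast
qed

locale equivalent_to_dilation =
  fixes \<Phi> :: "'a::cstar_algebra \<Rightarrow> 'h::chilbert_space \<Rightarrow> 'h"
    and \<pi> :: "'a \<Rightarrow> 'm::chilbert_space \<Rightarrow> 'm" and J :: "'h \<Rightarrow> 'm" and C s :: real
  assumes \<Phi>: "\<Phi> \<in> UCP" and \<pi>: "unital_star_rep \<pi>" and J: "bounded_clinear J"
    and dense: "closure (range (dilation_map \<pi> J)) = UNIV"
    and C_pos: "0 < C" and upper: "\<And>l. Re (kernel_form \<Phi> l l) \<le> C * (norm (dilation_map \<pi> J l))\<^sup>2"
    and s_pos: "0 < s" and lower: "\<And>l. s * (norm (dilation_map \<pi> J l))\<^sup>2 \<le> Re (kernel_form \<Phi> l l)"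
begin

abbreviation \<iota> where "\<iota> \<equiv> dilation_map \<pi> J"

sublocale K: nonneg_sesquilinear "(@)" formal_scaleC "kernel_form \<Phi>"
  by (rule UCP_kernel_form_sesquilinear[OF \<Phi>])

text \<open>The upper bound makes \<open>kernel_form \<Phi>\<close> vanish on the kernel of \<open>\<iota>\<close>, so it descends to
  the dense subspace \<open>range \<iota>\<close>.\<close>

lemma kernel_form_respects_dilation_map:
  assumes "\<iota> l1 = \<iota> l2"
  shows "kernel_form \<Phi> l1 h = kernel_form \<Phi> l2 h" and "kernel_form \<Phi> h l1 = kernel_form \<Phi> h l2"
proof -
  let ?d = "l1 @ formal_scaleC (- 1) l2"
  have "\<iota> ?d = 0"
    using assms by (simp add: dilation_map_append dilation_map_formal_scaleC[OF \<pi> J] scaleC_minus1_left)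
  then have "Re (kernel_form \<Phi> ?d ?d) = 0"
    using upper[of ?d] K.Re_self_nonneg[of ?d] by simp
  then have "kernel_form \<Phi> ?d h = 0" by (rule K.null_self_imp_zero)
  then show left: "kernel_form \<Phi> l1 h = kernel_form \<Phi> l2 h"
    by (simp add: kernel_form_append_left kernel_form_formal_scaleC_left)
  show "kernel_form \<Phi> h l1 = kernel_form \<Phi> h l2"
    using left K.hermitian[of l1 h] K.hermitian[of l2 h] by simp
qed

definition representative :: "'m \<Rightarrow> ('a \<times> 'h) list"
  where "representative m = (SOME l. \<iota> l = m)"

lemma dilation_map_representative: "\<iota> (representative (\<iota> l)) = \<iota> l"
  unfolding representative_def by (rule someI_ex) blast

lemma kernel_form_representative:
  "kernel_form \<Phi> (representative (\<iota> l)) l' = kernel_form \<Phi> l l'"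
  "kernel_form \<Phi> l (representative (\<iota> l')) = kernel_form \<Phi> l l'"
  by (rule kernel_form_respects_dilation_map[OF dilation_map_representative])+

lemma representing_vector_exists:
  "\<exists>u. (\<forall>l. cinner (\<iota> l) u = kernel_form \<Phi> l l') \<and> norm u \<le> C * norm (\<iota> l')"
proof -
  let ?f = "\<lambda>x. cnj (kernel_form \<Phi> (representative x) l')"
  have "\<exists>u. (\<forall>x\<in>range \<iota>. ?f x = cinner u x) \<and> norm u \<le> C * norm (\<iota> l')"
  proof (rule riesz_representation_dense[OF dense csubspace_range_dilation_map[OF \<pi> J]])
    show "?f (x + y) = ?f x + ?f y" if xy: "x \<in> range \<iota>" "y \<in> range \<iota>" for x y
    proof -
      obtain l1 l2 where x: "x = \<iota> l1" and y: "y = \<iota> l2" using xy by blast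
      then have "x + y = \<iota> (l1 @ l2)" by (simp add: dilation_map_append)
      then show ?thesis by (simp add: x y kernel_form_representative kernel_form_append_left)
    qed
    show "?f (c *\<^sub>C x) = c * ?f x" if x: "x \<in> range \<iota>" for c x
    proof -
      obtain l where x: "x = \<iota> l" using x by blast
      then have "c *\<^sub>C x = \<iota> (formal_scaleC c l)" by (simp add: dilation_map_formal_scaleC[OF \<pi> J])
      then show ?thesis by (simp add: x kernel_form_representative kernel_form_formal_scaleC_left)
    qed
    show "cmod (?f x) \<le> C * norm (\<iota> l') * norm x" if x: "x \<in> range \<iota>" for x
    proof -
      obtain l where "x = \<iota> l" using x by blast
      have "cmod (kernel_form \<Phi> l l') \<le> sqrt (Re (kernel_form \<Phi> l l)) * sqrt (Re (kernel_form \<Phi> l' l'))"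
        by (rule K.cauchy_schwarz_sqrt)
      also have "\<dots> \<le> sqrt (C * (norm (\<iota> l))\<^sup>2) * sqrt (C * (norm (\<iota> l'))\<^sup>2)"
        using K.Re_self_nonneg C_pos by (intro mult_mono real_sqrt_le_mono upper) auto
      also have "\<dots> = C * norm (\<iota> l') * norm (\<iota> l)"
        using C_pos by (simp add: real_sqrt_mult)
      finally show ?thesis by (simp add: \<open>x = \<iota> l\<close> kernel_form_representative)
    qed
  qed (use C_pos in simp)
  then obtain u where u: "\<And>x. x \<in> range \<iota> \<Longrightarrow> ?f x = cinner u x" and u_norm: "norm u \<le> C * norm (\<iota> l')"
    by blast
  have "cinner (\<iota> l) u = kernel_form \<Phi> l l'" for l
    using arg_cong[OF u[OF rangeI[of \<iota> l]], of cnj] cinner_commute[of "\<iota> l" u]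
    by (simp add: kernel_form_representative)
  then show ?thesis using u_norm by blast
qed

definition form_operator :: "'m \<Rightarrow> 'm"
  where "form_operator m =
    (SOME u. (\<forall>l. cinner (\<iota> l) u = kernel_form \<Phi> l (representative m)) \<and> norm u \<le> C * norm m)"

lemma form_operator:
  "cinner (\<iota> l) (form_operator (\<iota> l')) = kernel_form \<Phi> l l'"
  "norm (form_operator (\<iota> l')) \<le> C * norm (\<iota> l')"
proof -
  have "\<exists>u. (\<forall>l. cinner (\<iota> l) u = kernel_form \<Phi> l (representative (\<iota> l'))) \<and> norm u \<le> C * norm (\<iota> l')"
    using representing_vector_exists[of "representative (\<iota> l')"]
    by (simp add: dilation_map_representative)
  then have "(\<forall>l. cinner (\<iota> l) (form_operator (\<iota> l')) = kernel_form \<Phi> l (representative (\<iota> l')))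
      \<and> norm (form_operator (\<iota> l')) \<le> C * norm (\<iota> l')"
    unfolding form_operator_def by (rule someI_ex)
  then show "cinner (\<iota> l) (form_operator (\<iota> l')) = kernel_form \<Phi> l l'"
    and "norm (form_operator (\<iota> l')) \<le> C * norm (\<iota> l')"
    by (simp_all add: kernel_form_representative)
qed

lemma form_operator_unique: "(\<And>l. cinner (\<iota> l) u = kernel_form \<Phi> l l') \<Longrightarrow> form_operator (\<iota> l') = u"
  by (rule cinner_ext_dense[OF dense]) (auto simp: form_operator)

lemma bounded_form_operator_exists:
  "\<exists>E. bounded_clinear E \<and> (\<forall>l l'. cinner (\<iota> l) (E (\<iota> l')) = kernel_form \<Phi> l l')"
proof -
  have "\<exists>E. bounded_clinear E \<and> (\<forall>x\<in>range \<iota>. E x = form_operator x)"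
  proof (rule bounded_clinear_extension_from_dense[OF dense csubspace_range_dilation_map[OF \<pi> J]])
    show "form_operator (x + y) = form_operator x + form_operator y"
      if xy: "x \<in> range \<iota>" "y \<in> range \<iota>" for x y
    proof -
      obtain l1 l2 where x: "x = \<iota> l1" and y: "y = \<iota> l2" using xy by blast
      show ?thesis unfolding x y dilation_map_append[symmetric]
        by (rule form_operator_unique) (simp add: cinner_add_right form_operator kernel_form_append_right)
    qed
    show "form_operator (c *\<^sub>C x) = c *\<^sub>C form_operator x" if x: "x \<in> range \<iota>" for c x
    proof -
      obtain l where x: "x = \<iota> l" using x by blast
      show ?thesis unfolding x dilation_map_formal_scaleC[OF \<pi> J, symmetric]
        by (rule form_operator_unique)
          (simp add: cinner_scaleC_right form_operator kernel_form_formal_scaleC_right[OF \<Phi>])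
    qed
    show "norm (form_operator x) \<le> C * norm x" if "x \<in> range \<iota>" for x
      using that form_operator(2) by blast
  qed
  then show ?thesis by (auto simp: form_operator)
qed

context
  fixes E :: "'m \<Rightarrow> 'm"
  assumes E: "bounded_clinear E" and E_kernel: "\<And>l l'. cinner (\<iota> l) (E (\<iota> l')) = kernel_form \<Phi> l l'"
begin

lemma continuous_on_cinner_E: "continuous_on UNIV (\<lambda>x. cinner x (E x))"
  by (rule continuous_on_cinner[OF continuous_on_id continuous_on_bounded_clinear[OF E continuous_on_id]])

lemma E_positive: "positive_op E"
proof -
  have nonneg: "cnonneg (cinner x (E x))" if "x \<in> range \<iota>" for x
    using that kernel_form_nonneg[OF UCP_completely_positive[OF \<Phi>]] by (auto simp: E_kernel)
  have "Im (cinner x (E x)) = 0" for x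
    by (rule continuous_eq_on_dense[OF dense continuous_on_Im[OF continuous_on_cinner_E]
          continuous_on_const])
      (use nonneg in \<open>simp add: cnonneg_def\<close>)
  moreover have "0 \<le> Re (cinner x (E x))" for x
    by (rule continuous_le_on_dense[OF dense continuous_on_const
          continuous_on_Re[OF continuous_on_cinner_E]])
      (use nonneg in \<open>simp add: cnonneg_def\<close>)
  ultimately show ?thesis using E by (simp add: positive_op_def cnonneg_def)
qed

lemma E_coercive: "s * (norm x)\<^sup>2 \<le> Re (cinner x (E x))"
proof (rule continuous_le_on_dense[OF dense _ continuous_on_Re[OF continuous_on_cinner_E]])
  show "continuous_on UNIV (\<lambda>x. s * (norm x)\<^sup>2)" by (intro continuous_intros)
qed (auto simp: E_kernel lower)

lemma E_commute: "E (\<pi> c x) = \<pi> c (E x)"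
proof -
  have "E (\<pi> c (\<iota> l')) = \<pi> c (E (\<iota> l'))" for l'
  proof (rule cinner_ext_dense[OF dense])
    fix m assume "m \<in> range \<iota>"
    then obtain l where m: "m = \<iota> l" by blast
    have \<pi>_c: "\<pi> c = cadjoint (\<pi> (invol c))"
      using star_rep_invol[OF \<pi>, of "invol c"] by (simp add: invol_invol)
    have "cinner m (\<pi> c (E (\<iota> l'))) = cinner (\<pi> (invol c) (\<iota> l)) (E (\<iota> l'))"
      unfolding m \<pi>_c by (rule cinner_cadjoint_right[OF star_rep_bounded[OF \<pi>]])
    also have "\<dots> = kernel_form \<Phi> (formal_mult (invol c) l) l'"
      by (simp add: dilation_map_formal_mult[OF \<pi> J, symmetric] E_kernel)
    also have "\<dots> = kernel_form \<Phi> l (formal_mult c l')" by (simp add: kernel_form_formal_mult invol_invol)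
    also have "\<dots> = cinner m (E (\<pi> c (\<iota> l')))"
      by (simp add: m dilation_map_formal_mult[OF \<pi> J, symmetric] E_kernel)
    finally show "cinner m (E (\<pi> c (\<iota> l'))) = cinner m (\<pi> c (E (\<iota> l')))" by simp
  qed
  moreover have "continuous_on UNIV (\<lambda>x. E (\<pi> c x))" "continuous_on UNIV (\<lambda>x. \<pi> c (E x))"
    using continuous_on_bounded_clinear[OF E] continuous_on_bounded_clinear[OF star_rep_bounded[OF \<pi>]]
      continuous_on_id by blast+
  ultimately show ?thesis using continuous_eq_on_dense[OF dense] by blast
qed

lemma E_compression: "\<Phi> a = cadjoint J \<circ> \<pi> a \<circ> E \<circ> J"
proof
  fix w
  show "\<Phi> a w = (cadjoint J \<circ> \<pi> a \<circ> E \<circ> J) w"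
  proof (rule cinner_ext)
    fix v
    have "cinner v ((cadjoint J \<circ> \<pi> a \<circ> E \<circ> J) w) = cinner (\<iota> [(1, v)]) (E (\<iota> [(a, w)]))"
      by (simp add: cinner_cadjoint_right[OF J] E_commute dilation_map_single star_rep_one[OF \<pi>])
    also have "\<dots> = cinner v (\<Phi> a w)" by (simp add: E_kernel kernel_form_single)
    finally show "cinner v (\<Phi> a w) = cinner v ((cadjoint J \<circ> \<pi> a \<circ> E \<circ> J) w)" by simp
  qed
qed

end

lemma Radon_Nikodym_derivative_exists:
  "\<exists>E\<in>F_set \<pi> J. has_bounded_inverse E \<and> (\<forall>a. \<Phi> a = cadjoint J \<circ> \<pi> a \<circ> E \<circ> J)"
proof -
  obtain E where E: "bounded_clinear E"
    and E_kernel: "\<And>l l'. cinner (\<iota> l) (E (\<iota> l')) = kernel_form \<Phi> l l'"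
    using bounded_form_operator_exists by blast
  note compression = E_compression[OF E E_kernel]
  \<comment> \<open>\<open>\<Phi>\<close> is unital, so the case \<open>a = 1\<close> of the compression formula is \<open>J\<^sup>* E J = 1\<close>\<close>
  have "cadjoint J \<circ> E \<circ> J = id"
    using compression[of 1] UCP_one[OF \<Phi>] star_rep_one[OF \<pi>] by (auto simp: fun_eq_iff)
  then have "E \<in> F_set \<pi> J"
    using E_positive[OF E E_kernel] E_commute[OF E E_kernel] by (auto simp: F_set_def fun_eq_iff)
  moreover have "has_bounded_inverse E"
    by (rule coercive_imp_bounded_inverse[OF E s_pos E_coercive[OF E E_kernel]])
  ultimately show ?thesis using compression by blast
qed

end

lemma Radon_Nikodym_derivative_if_conv_eq:
  fixes \<Phi> \<Psi> :: "'a::cstar_algebra \<Rightarrow> 'h::chilbert_space \<Rightarrow> 'h"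
    and \<pi> :: "'a \<Rightarrow> 'm::chilbert_space \<Rightarrow> 'm" and J :: "'h \<Rightarrow> 'm"
  assumes "\<Phi> \<in> UCP" and dilation: "min_stinespring \<Psi> \<pi> J" and "conv_eq UCP \<Phi> \<Psi>"
  shows "\<exists>E\<in>F_set \<pi> J. has_bounded_inverse E \<and> (\<forall>a. \<Phi> a = cadjoint J \<circ> \<pi> a \<circ> E \<circ> J)"
proof -
  note \<pi> = min_stinespring_rep[OF dilation] and J = min_stinespring_bounded[OF dilation]
  have \<Psi>: "Re (kernel_form \<Psi> l l) = (norm (dilation_map \<pi> J l))\<^sup>2" for l
    using kernel_form_compression[OF \<pi> J min_stinespring_eq[OF dilation]] by (simp add: Re_cinner_self)
  from \<open>conv_eq UCP \<Phi> \<Psi>\<close> have "conv_le UCP \<Phi> \<Psi>" and "conv_le UCP \<Psi> \<Phi>"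
    by (simp_all add: conv_eq_def)
  obtain t where "0 < t" and t: "\<And>l. t * Re (kernel_form \<Phi> l l) \<le> (norm (dilation_map \<pi> J l))\<^sup>2"
    using conv_le_kernel_form_bound[OF \<open>conv_le UCP \<Phi> \<Psi>\<close>] unfolding \<Psi> by blast
  obtain r where "0 < r" and r: "\<And>l. r * (norm (dilation_map \<pi> J l))\<^sup>2 \<le> Re (kernel_form \<Phi> l l)"
    using conv_le_kernel_form_bound[OF \<open>conv_le UCP \<Psi> \<Phi>\<close>] unfolding \<Psi> by blast
  have "Re (kernel_form \<Phi> l l) \<le> (1 / t) * (norm (dilation_map \<pi> J l))\<^sup>2" for l
    using t[of l] \<open>0 < t\<close> by (simp add: field_simps)
  then interpret equivalent_to_dilation \<Phi> \<pi> J "1 / t" r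
    using \<open>\<Phi> \<in> UCP\<close> \<pi> J range_dilation_map_dense[OF \<pi> J] dilation \<open>0 < t\<close> \<open>0 < r\<close> r
    by unfold_locales (auto simp: min_stinespring_def)
  show ?thesis by (rule Radon_Nikodym_derivative_exists)
qed

theorem lemma3:
  fixes \<Phi> \<Psi> :: "'a::cstar_algebra \<Rightarrow> 'h::chilbert_space \<Rightarrow> 'h"
    and \<pi> :: "'a \<Rightarrow> 'm::chilbert_space \<Rightarrow> 'm"
    and J :: "'h \<Rightarrow> 'm"
  assumes "\<Phi> \<in> UCP" and "\<Psi> \<in> UCP"
    and "min_stinespring \<Psi> \<pi> J"
  shows "conv_eq UCP \<Phi> \<Psi> \<longleftrightarrow>
    (\<exists>E\<in>F_set \<pi> J. has_bounded_inverse E \<and> (\<forall>a. \<Phi> a = cadjoint J \<circ> \<pi> a \<circ> E \<circ> J))"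
  using Radon_Nikodym_derivative_if_conv_eq[OF assms(1,3)] conv_eq_if_invertible_in_F_set[OF assms]
  by blast

end
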